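(* Suppose there exist polynomials $p$ and $q$ and a constant $\gamma > 0$ such that $$\Omega(2^{\gamma n}/p(n)) \leq \chi(T^{\otimes n}) \leq O(q(n)2^{\gamma n}).$$ Then for every linear code $L\subseteq \mathbb{F}_2^m$ of block length $m$ and dimension $k < m/2$ we have $$\gamma \leq \frac{\log_2(\chi(\hat{L}))}{m - 2k}.$$
   Context: The stabilizer rank $\chi(\psi)$ of a state $\ket{\psi}$ is the minimum number $k$ of stabilizer states $\ket{\Phi_i}$ such that $\ket{\psi}=\sum_{i=1}^k c_i\ket{\Phi_i}$. Here $\ket{T} = 2^{-1/2}(\ket{0}+e^{i\pi/4}\ket{1})$ and $\ket{T^\perp} = Z\ket{T}$. For a linear space $L \subseteq \mathbb{F}_2^m$ of dimension $k$, the magic code state is $\ket{\hat{L}} = 2^{-k/2}\sum_{x \in L} \ket{\hat{x}}$, where for $x\in\mathbb{F}_2^m$, $\ket{\hat{x}} = \ket{\hat{x}_1}\otimes\cdots\otimes\ket{\hat{x}_m}$ with $\ket{\hat{0}} = \ket{T}$ and $\ket{\hat{1}} = \ket{T^\perp}$ (i.e. $x$ expanded in the magic basis $\{\ket{T},\ket{T^\perp}\}$). $\chi(\hat{L})$ denotes the stabilizer rank of $\ket{\hat{L}}$. *)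

theory Defs
  imports Complex_Main "HOL-Library.Landau_Symbols" "HOL-Computational_Algebra.Polynomial"
begin

text \<open>An n-qubit (unnormalised) vector is a function from bit strings (bool lists) to
  complex amplitudes; only strings of length n are meaningful (all states used below
  vanish on strings of any other length).\<close>

type_synonym qstate = "bool list \<Rightarrow> complex"

definition ket0 :: "nat \<Rightarrow> qstate" where
  "ket0 n = (\<lambda>x. if x = replicate n False then 1 else 0)"

definition hgate :: "nat \<Rightarrow> qstate \<Rightarrow> qstate" where
  "hgate j \<psi> = (\<lambda>x. (\<psi> (x[j := False]) + (if x ! j then -1 else 1) * \<psi> (x[j := True]))
                      / complex_of_real (sqrt 2))"

definition sgate :: "nat \<Rightarrow> qstate \<Rightarrow> qstate" where
  "sgate j \<psi> = (\<lambda>x. (if x ! j then \<i> else 1) * \<psi> x)"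

definition cnot :: "nat \<Rightarrow> nat \<Rightarrow> qstate \<Rightarrow> qstate" where
  "cnot a b \<psi> = (\<lambda>x. \<psi> (x[b := (x ! b \<noteq> x ! a)]))"

inductive_set stab_states :: "nat \<Rightarrow> qstate set" for n :: nat where
  init: "ket0 n \<in> stab_states n"
| H: "\<psi> \<in> stab_states n \<Longrightarrow> j < n \<Longrightarrow> hgate j \<psi> \<in> stab_states n"
| S: "\<psi> \<in> stab_states n \<Longrightarrow> j < n \<Longrightarrow> sgate j \<psi> \<in> stab_states n"
| CNOT: "\<psi> \<in> stab_states n \<Longrightarrow> a < n \<Longrightarrow> b < n \<Longrightarrow> a \<noteq> b \<Longrightarrow> cnot a b \<psi> \<in> stab_states n"

definition stab_rank :: "nat \<Rightarrow> qstate \<Rightarrow> nat" where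
  "stab_rank n \<psi> = (LEAST k. \<exists>c \<Phi>. (\<forall>i<k. \<Phi> i \<in> stab_states n) \<and>
                                   \<psi> = (\<lambda>x. \<Sum>i<k. c i * \<Phi> i x))"

definition omega :: complex where
  "omega = cis (pi / 4)"

definition T_tensor :: "nat \<Rightarrow> qstate" where
  "T_tensor n = (\<lambda>y. if length y = n then
       (\<Prod>j<n. (if y ! j then omega else 1) / complex_of_real (sqrt 2)) else 0)"

text \<open>Magic basis state |x^> = |x^_1> ... |x^_m>, |0^> = |T>, |1^> = |T^perp> = Z|T>.\<close>
definition magic_ket :: "nat \<Rightarrow> bool list \<Rightarrow> qstate" where
  "magic_ket m x = (\<lambda>y. if length y = m then
       (\<Prod>j<m. (if y ! j then (if x ! j then - omega else omega) else 1)
                 / complex_of_real (sqrt 2)) else 0)"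

text \<open>Linear codes L \<subseteq> F_2^m (vectors as bool lists of length m, addition = xor),
  of dimension k (over F_2 a subspace has dimension k iff it has 2^k elements).\<close>
definition xor_vec :: "bool list \<Rightarrow> bool list \<Rightarrow> bool list" where
  "xor_vec x y = map2 (\<noteq>) x y"

definition linear_code :: "nat \<Rightarrow> bool list set \<Rightarrow> bool" where
  "linear_code m L \<longleftrightarrow> L \<subseteq> {x. length x = m} \<and> replicate m False \<in> L \<and>
                        (\<forall>x\<in>L. \<forall>y\<in>L. xor_vec x y \<in> L)"

definition code_dim :: "bool list set \<Rightarrow> nat \<Rightarrow> bool" where
  "code_dim L k \<longleftrightarrow> card L = 2 ^ k"

definition magic_code_state :: "nat \<Rightarrow> nat \<Rightarrow> bool list set \<Rightarrow> qstate" where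
  "magic_code_state m k L = (\<lambda>y. complex_of_real (2 powr (- real k / 2)) *
                               (\<Sum>x\<in>L. magic_ket m x y))"

end

theory Submission
  imports Defs "HOL-Real_Asymp.Real_Asymp"
begin

text \<open>Let V be the dual of L. Expanding the magic basis in the computational basis, |L^> is
  proportional to |T>^{\<otimes>m} restricted to V, so that restriction has stabilizer rank at most
  \<chi>(L^). A set J of k coordinates complementing an information set of V lets every y be written
  uniquely as y = v + a with v \<in> V and a supported on J, where v depends affinely on y. Since
  T(0) T(1) = \<omega>, the amplitude of |T>^{\<otimes>m} at y is \<omega>^{-k} times the product of the amplitudes of v
  (restricted T), of y on J and of \<not> v on J (two copies of |T>^{\<otimes>k}). So |T>^{\<otimes>m} arises from
  (restricted T) \<otimes> |T>^{\<otimes>2k} by substituting affine functions of y for qubits, which maps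
  stabilizer states to multiples of stabilizer states, and \<chi>(T^{\<otimes>m}) \<le> \<chi>(L^) \<chi>(T^{\<otimes>2k}).
  Applied to the t-fold power of L this gives \<chi>(T^{\<otimes>mt}) \<le> \<chi>(L^)^t \<chi>(T^{\<otimes>2kt}); if
  \<chi>(T^{\<otimes>n}) grows like 2^{\<gamma>n} up to polynomial factors, comparing growth rates in t yields
  2^{\<gamma>(m - 2k)} \<le> \<chi>(L^).\<close>

definition qstate_on :: "nat \<Rightarrow> qstate \<Rightarrow> bool" where
  "qstate_on n \<psi> \<longleftrightarrow> (\<forall>y. length y \<noteq> n \<longrightarrow> \<psi> y = 0)"

definition scale :: "complex \<Rightarrow> qstate \<Rightarrow> qstate" where
  "scale c \<psi> = (\<lambda>y. c * \<psi> y)"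

definition scaled_stab :: "nat \<Rightarrow> qstate set" where
  "scaled_stab n = {scale c \<Phi> | c \<Phi>. \<Phi> \<in> stab_states n}"

lemma qstate_onD: "qstate_on n \<psi> \<Longrightarrow> length y \<noteq> n \<Longrightarrow> \<psi> y = 0"
  by (simp add: qstate_on_def)

lemma qstate_on_hgate: "qstate_on n \<psi> \<Longrightarrow> qstate_on n (hgate j \<psi>)"
  by (simp add: qstate_on_def hgate_def)

lemma qstate_on_sgate: "qstate_on n \<psi> \<Longrightarrow> qstate_on n (sgate j \<psi>)"
  by (simp add: qstate_on_def sgate_def)

lemma qstate_on_cnot: "qstate_on n \<psi> \<Longrightarrow> qstate_on n (cnot a b \<psi>)"
  by (simp add: qstate_on_def cnot_def)

lemma qstate_on_ket0: "qstate_on n (ket0 n)"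
  by (auto simp add: qstate_on_def ket0_def)

lemma stab_states_qstate_on: "\<psi> \<in> stab_states n \<Longrightarrow> qstate_on n \<psi>"
  by (induction rule: stab_states.induct)
     (auto intro: qstate_on_ket0 qstate_on_hgate qstate_on_sgate qstate_on_cnot)

lemma scaled_stabI: "\<Phi> \<in> stab_states n \<Longrightarrow> scale c \<Phi> \<in> scaled_stab n"
  unfolding scaled_stab_def by blast

lemma scaled_stabE: assumes "\<psi> \<in> scaled_stab n" obtains c \<Phi> where "\<Phi> \<in> stab_states n" "\<psi> = scale c \<Phi>"
  using assms unfolding scaled_stab_def by blast

lemma scale_one: "scale 1 \<psi> = \<psi>" by (simp add: scale_def)

lemma scale_scale: "scale a (scale b \<psi>) = scale (a*b) \<psi>" by (simp add: scale_def mult.assoc)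

lemma stab_in_scaled_stab: "\<psi> \<in> stab_states n \<Longrightarrow> \<psi> \<in> scaled_stab n"
  using scaled_stabI[of \<psi> n 1] by (simp add: scale_one)

lemma scaled_stab_scale: "\<psi> \<in> scaled_stab n \<Longrightarrow> scale c \<psi> \<in> scaled_stab n"
  by (metis scaled_stabE scaled_stabI scale_scale)

lemma zero_in_scaled_stab: "(\<lambda>y. 0) \<in> scaled_stab n"
proof -
  have "scale 0 (ket0 n) \<in> scaled_stab n" by (rule scaled_stabI, rule stab_states.init)
  then show ?thesis by (simp add: scale_def)
qed

lemma hgate_add: "hgate j (\<lambda>y. f y + g y) = (\<lambda>y. hgate j f y + hgate j g y)"
  by (auto simp: hgate_def add_divide_distrib algebra_simps)

lemma hgate_scale: "hgate j (scale c f) = scale c (hgate j f)"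
  by (auto simp: hgate_def scale_def algebra_simps)

lemma sgate_add: "sgate j (\<lambda>y. f y + g y) = (\<lambda>y. sgate j f y + sgate j g y)"
  by (auto simp: sgate_def algebra_simps)

lemma sgate_scale: "sgate j (scale c f) = scale c (sgate j f)"
  by (auto simp: sgate_def scale_def algebra_simps)

lemma cnot_add: "cnot a b (\<lambda>y. f y + g y) = (\<lambda>y. cnot a b f y + cnot a b g y)"
  by (auto simp: cnot_def)

lemma cnot_scale: "cnot a b (scale c f) = scale c (cnot a b f)"
  by (auto simp: cnot_def scale_def)

lemma scaled_stab_hgate: "\<psi> \<in> scaled_stab n \<Longrightarrow> j < n \<Longrightarrow> hgate j \<psi> \<in> scaled_stab n"
  by (metis scaled_stabE scaled_stabI hgate_scale stab_states.H)

lemma scaled_stab_sgate: "\<psi> \<in> scaled_stab n \<Longrightarrow> j < n \<Longrightarrow> sgate j \<psi> \<in> scaled_stab n"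
  by (metis scaled_stabE scaled_stabI sgate_scale stab_states.S)

lemma scaled_stab_cnot: "\<psi> \<in> scaled_stab n \<Longrightarrow> a < n \<Longrightarrow> b < n \<Longrightarrow> a \<noteq> b \<Longrightarrow> cnot a b \<psi> \<in> scaled_stab n"
  by (metis scaled_stabE scaled_stabI cnot_scale stab_states.CNOT)

lemma sqrt2_times_sqrt2: "complex_of_real (sqrt 2) * complex_of_real (sqrt 2) = 2"
  by (simp flip: of_real_mult)

lemma divide_sqrt2_twice: "(X / complex_of_real (sqrt 2) + s * (Y / complex_of_real (sqrt 2))) / complex_of_real (sqrt 2) = (X + s * Y) / 2"
proof -
  define r where "r = complex_of_real (sqrt 2)"
  have r: "r * r = 2" "r \<noteq> 0" unfolding r_def using sqrt2_times_sqrt2 by auto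
  have "(X / r + s * (Y / r)) / r = (X + s * Y) / (r * r)"
    using r(2) by (simp add: field_simps)
  then show ?thesis using r(1) unfolding r_def by simp
qed

lemma hgate_hgate: assumes "qstate_on n \<psi>" "j < n" shows "hgate j (hgate j \<psi>) = \<psi>"
proof
  fix y
  show "hgate j (hgate j \<psi>) y = \<psi> y"
  proof (cases "length y = n")
    case True
    then have jl: "j < length y" using assms by simp
    define A where "A = \<psi> (y[j := False])"
    define B where "B = \<psi> (y[j := True])"
    have e: "hgate j (hgate j \<psi>) y = ((A + B) / complex_of_real (sqrt 2) + (if y ! j then -1 else 1) * ((A - B) / complex_of_real (sqrt 2))) / complex_of_real (sqrt 2)"
      unfolding hgate_def A_def B_def using jl by (simp add: algebra_simps)
    have e2: "\<dots> = ((A + B) + (if y ! j then -1 else 1) * (A - B)) / 2"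
      using divide_sqrt2_twice[of "A + B" "if y ! j then -1 else 1" "A - B"] by simp
    show ?thesis
    proof (cases "y ! j")
      case True
      then have "y[j := True] = y" using list_update_id[of y j] by simp
      then show ?thesis using True e e2 B_def by simp
    next
      case False
      then have "y[j := False] = y" using list_update_id[of y j] by simp
      then show ?thesis using False e e2 A_def by simp
    qed
  next
    case False
    then show ?thesis using assms qstate_on_hgate[of n \<psi> j] qstate_on_hgate[of n "hgate j \<psi>" j] by (simp add: qstate_onD)
  qed
qed

lemma cnot_cnot: assumes "a \<noteq> b" shows "cnot a b (cnot a b \<psi>) = \<psi>"
proof
  fix y
  show "cnot a b (cnot a b \<psi>) y = \<psi> y"
  proof (cases "b < length y")
    case True
    have "((y ! b = (\<not> y ! a)) = (\<not> y ! a)) = y ! b" by auto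
    then show ?thesis using assms True
      by (simp add: cnot_def)
  next
    case False
    then show ?thesis by (simp add: cnot_def list_update_beyond)
  qed
qed

lemma sgate_order_four: "sgate j (sgate j (sgate j (sgate j \<psi>))) = \<psi>"
  by (auto simp: sgate_def)

section \<open>Pauli operators\<close>

definition sign_of :: "bool \<Rightarrow> complex" where "sign_of b = (if b then -1 else 1)"

lemma sign_of_square: "sign_of b * sign_of b = 1" by (simp add: sign_of_def)

lemma sign_of_simps[simp]: "sign_of True = -1" "sign_of False = 1" by (simp_all add: sign_of_def)

definition zphase :: "nat \<Rightarrow> (nat \<Rightarrow> bool) \<Rightarrow> (nat \<Rightarrow> bool) \<Rightarrow> complex" where
  "zphase n z x = (\<Prod>j<n. sign_of (z j \<and> x j))"

definition xflip :: "(nat \<Rightarrow> bool) \<Rightarrow> bool list \<Rightarrow> bool list" where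
  "xflip xv y = map (\<lambda>j. y ! j \<noteq> xv j) [0..<length y]"

text \<open>The triple (r, x, z) stands for the Pauli operator \<i>^r Z^z X^x.\<close>

definition pauli :: "nat \<Rightarrow> nat \<times> (nat \<Rightarrow> bool) \<times> (nat \<Rightarrow> bool) \<Rightarrow> qstate \<Rightarrow> qstate" where
  "pauli n P \<psi> = (case P of (r, xv, zv) \<Rightarrow>
     (\<lambda>y. if length y = n then \<i> ^ r * zphase n zv (nth y) * \<psi> (xflip xv y) else 0))"

lemma pauli_apply: "pauli n (r, xv, zv) \<psi> y = (if length y = n then \<i> ^ r * zphase n zv (nth y) * \<psi> (xflip xv y) else 0)"
  by (simp add: pauli_def)

lemma xflip_length[simp]: "length (xflip xv y) = length y" by (simp add: xflip_def)

lemma xflip_nth[simp]: "j < length y \<Longrightarrow> xflip xv y ! j = (y ! j \<noteq> xv j)" by (simp add: xflip_def)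

lemma xflip_list_update: "j < length y \<Longrightarrow> xflip xv (y[j := c]) = (xflip xv y)[j := (c \<noteq> xv j)]"
  by (rule nth_equalityI) (auto simp: nth_list_update)

lemma xflip_fun_upd: "j < length y \<Longrightarrow> xflip (xv(j := b)) y = (xflip xv y)[j := (y ! j \<noteq> b)]"
  by (rule nth_equalityI) (auto simp: nth_list_update)

lemma xflip_xflip: "xflip xv (xflip xv' y) = xflip (\<lambda>i. xv i \<noteq> xv' i) y"
  by (rule nth_equalityI) auto

lemma xflip_False: "xflip (\<lambda>_. False) y = y"
  by (rule nth_equalityI) auto

lemma zphase_cases: "zphase n z x = 1 \<or> zphase n z x = -1"
proof (induction n)
  case 0 then show ?case by (simp add: zphase_def)
next
  case (Suc n)
  have "zphase (Suc n) z x = zphase n z x * sign_of (z n \<and> x n)" by (simp add: zphase_def)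
  then show ?case using Suc by (auto simp: sign_of_def)
qed

lemma zphase_square: "zphase n z x * zphase n z x = 1"
  using zphase_cases[of n z x] by auto

lemma zphase_remove: "j < n \<Longrightarrow> zphase n z x = sign_of (z j \<and> x j) * (\<Prod>i\<in>{..<n}-{j}. sign_of (z i \<and> x i))"
  unfolding zphase_def by (simp add: prod.remove)

lemma zphase_update:
  assumes "j < n" "\<And>i. i < n \<Longrightarrow> i \<noteq> j \<Longrightarrow> (z i \<and> x i) = (z' i \<and> x' i)"
  shows "zphase n z x = zphase n z' x' * sign_of (z j \<and> x j) * sign_of (z' j \<and> x' j)"
proof -
  have r: "(\<Prod>i\<in>{..<n}-{j}. sign_of (z i \<and> x i)) = (\<Prod>i\<in>{..<n}-{j}. sign_of (z' i \<and> x' i))"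
    using assms(2) by (intro prod.cong) auto
  show ?thesis using zphase_remove[OF assms(1), of z x] zphase_remove[OF assms(1), of z' x'] r
    by (simp add: algebra_simps sign_of_square)
qed

lemma zphase_update2:
  assumes "a < n" "b < n" "a \<noteq> b" "\<And>i. i < n \<Longrightarrow> i \<noteq> a \<Longrightarrow> i \<noteq> b \<Longrightarrow> (z i \<and> x i) = (z' i \<and> x' i)"
  shows "zphase n z x = zphase n z' x' * sign_of (z a \<and> x a) * sign_of (z' a \<and> x' a) * sign_of (z b \<and> x b) * sign_of (z' b \<and> x' b)"
proof -
  define z1 where "z1 = z'(a := z a)"
  define x1 where "x1 = x'(a := x a)"
  have e1: "zphase n z x = zphase n z1 x1 * sign_of (z b \<and> x b) * sign_of (z1 b \<and> x1 b)"
    using assms by (intro zphase_update) (auto simp: z1_def x1_def)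
  have e2: "zphase n z1 x1 = zphase n z' x' * sign_of (z1 a \<and> x1 a) * sign_of (z' a \<and> x' a)"
    using assms by (intro zphase_update) (auto simp: z1_def x1_def)
  show ?thesis using e1 e2 assms(3) by (simp add: z1_def x1_def algebra_simps)
qed

lemma qstate_on_pauli: "qstate_on n (pauli n P \<psi>)"
  by (cases P) (simp add: qstate_on_def pauli_apply)

lemma pauli_add: "pauli n P (\<lambda>y. f y + g y) = (\<lambda>y. pauli n P f y + pauli n P g y)"
  by (cases P) (auto simp: pauli_apply algebra_simps)

lemma pauli_scale: "pauli n P (scale c f) = scale c (pauli n P f)"
  by (cases P) (auto simp: pauli_apply scale_def algebra_simps)

lemma pauli_identity: "qstate_on n \<psi> \<Longrightarrow> pauli n (r, \<lambda>_. False, \<lambda>_. False) \<psi> = scale (\<i> ^ r) \<psi>"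
  by (auto simp: pauli_apply scale_def zphase_def xflip_False qstate_onD)

lemma zphase_xflip:
  assumes "length y = n"
  shows "zphase n z (nth (xflip x y)) = zphase n z x * zphase n z (nth y)"
proof -
  have "(\<Prod>j<n. sign_of (z j \<and> xflip x y ! j)) = (\<Prod>j<n. sign_of (z j \<and> x j) * sign_of (z j \<and> y ! j))"
    using assms by (intro prod.cong) (auto simp: sign_of_def)
  then show ?thesis unfolding zphase_def by (simp add: prod.distrib)
qed

lemma zphase_mult: "zphase n z y * zphase n z' y = zphase n (\<lambda>i. z i \<noteq> z' i) y"
proof -
  have "(\<Prod>j<n. sign_of (z j \<and> y j) * sign_of (z' j \<and> y j)) = (\<Prod>j<n. sign_of ((z j \<noteq> z' j) \<and> y j))"
    by (intro prod.cong) (auto simp: sign_of_def)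
  then show ?thesis unfolding zphase_def by (simp add: prod.distrib)
qed

lemma zphase_eq_neg_one_power: "\<exists>e::nat. zphase n z x = (-1) ^ e"
  using zphase_cases[of n z x] by (metis power_0 power_one_right)

lemma pauli_compose: "\<exists>R. \<forall>\<psi>. pauli n P (pauli n Q \<psi>) = pauli n R \<psi>"
proof -
  obtain r x z where P: "P = (r, x, z)" by (cases P)
  obtain r' x' z' where Q: "Q = (r', x', z')" by (cases Q)
  obtain e :: nat where "zphase n z' x = (-1) ^ e" using zphase_eq_neg_one_power by blast
  then have e: "zphase n z' x = \<i> ^ (2 * e)" by (simp add: power_mult)
  have "pauli n P (pauli n Q \<psi>) y = pauli n (r + r' + 2 * e, \<lambda>i. x' i \<noteq> x i, \<lambda>i. z i \<noteq> z' i) \<psi> y"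
    for \<psi> y
  proof (cases "length y = n")
    case True
    then show ?thesis using zphase_mult[of n z "nth y" z']
      by (simp add: P Q pauli_apply xflip_xflip zphase_xflip e power_add algebra_simps)
  qed (simp add: P Q pauli_apply)
  then show ?thesis by (intro exI allI ext)
qed

lemma hgate_pauli:
  assumes "j < n"
  shows "hgate j (pauli n (r, xv, zv) \<psi>) =
         pauli n (r + (if xv j \<and> zv j then 2 else 0), xv(j := zv j), zv(j := xv j)) (hgate j \<psi>)"
proof
  fix y
  show "hgate j (pauli n (r, xv, zv) \<psi>) y =
         pauli n (r + (if xv j \<and> zv j then 2 else 0), xv(j := zv j), zv(j := xv j)) (hgate j \<psi>) y"
  proof (cases "length y = n")
    case False
    then show ?thesis by (simp add: hgate_def pauli_apply)
  next
    case True
    then have jl: "j < length y" using assms by simp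
    define u where "u = xflip xv y"
    define Z where "Z = zphase n (zv(j := xv j)) (nth y)"
    have zc: "zphase n zv (nth (y[j := c])) = Z * sign_of (zv j \<and> c) * sign_of (xv j \<and> y ! j)" for c
    proof -
      have "zphase n zv (nth (y[j := c])) = zphase n (zv(j := xv j)) (nth y) * sign_of (zv j \<and> nth (y[j := c]) j) * sign_of ((zv(j := xv j)) j \<and> nth y j)"
        using assms by (rule zphase_update) (auto simp: nth_list_update)
      then show ?thesis using jl unfolding Z_def by simp
    qed
    have fl: "xflip xv (y[j := c]) = u[j := (c \<noteq> xv j)]" for c
      unfolding u_def using jl by (rule xflip_list_update)
    have w: "xflip (xv(j := zv j)) y = u[j := (y ! j \<noteq> zv j)]"
      unfolding u_def using jl by (rule xflip_fun_upd)
    have lu: "length u = n" using True u_def by simp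
    have L: "hgate j (pauli n (r, xv, zv) \<psi>) y =
      (\<i> ^ r * (Z * sign_of (zv j \<and> False) * sign_of (xv j \<and> y ! j)) * \<psi> (u[j := xv j]) +
       (if y ! j then -1 else 1) * (\<i> ^ r * (Z * sign_of (zv j \<and> True) * sign_of (xv j \<and> y ! j)) * \<psi> (u[j := (\<not> xv j)])))
       / complex_of_real (sqrt 2)"
      unfolding hgate_def using True by (simp add: pauli_apply zc fl)
    have R: "pauli n (r + (if xv j \<and> zv j then 2 else 0), xv(j := zv j), zv(j := xv j)) (hgate j \<psi>) y =
       \<i> ^ (r + (if xv j \<and> zv j then 2 else 0)) * Z *
       ((\<psi> (u[j := False]) + (if y ! j \<noteq> zv j then -1 else 1) * \<psi> (u[j := True])) / complex_of_real (sqrt 2))"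
      unfolding hgate_def using True lu jl by (simp add: pauli_apply w Z_def)
    show ?thesis unfolding L R
      by (cases "xv j"; cases "zv j"; cases "y ! j") (simp_all add: power_add field_simps)
  qed
qed

lemma sgate_pauli:
  assumes "j < n"
  shows "sgate j (pauli n (r, xv, zv) \<psi>) =
         pauli n (r + (if xv j then 3 else 0), xv, zv(j := (zv j \<noteq> xv j))) (sgate j \<psi>)"
proof
  fix y
  show "sgate j (pauli n (r, xv, zv) \<psi>) y =
         pauli n (r + (if xv j then 3 else 0), xv, zv(j := (zv j \<noteq> xv j))) (sgate j \<psi>) y"
  proof (cases "length y = n")
    case False
    then show ?thesis by (simp add: sgate_def pauli_apply)
  next
    case True
    then have jl: "j < length y" using assms by simp
    define Z where "Z = zphase n (zv(j := (zv j \<noteq> xv j))) (nth y)"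
    have zc: "zphase n zv (nth y) = Z * sign_of (zv j \<and> y ! j) * sign_of ((zv j \<noteq> xv j) \<and> y ! j)"
    proof -
      have "zphase n zv (nth y) = zphase n (zv(j := (zv j \<noteq> xv j))) (nth y) * sign_of (zv j \<and> nth y j) * sign_of ((zv(j := (zv j \<noteq> xv j))) j \<and> nth y j)"
        using assms by (rule zphase_update) auto
      then show ?thesis unfolding Z_def by simp
    qed
    have i3: "\<i> ^ 3 = - \<i>" by (simp add: power3_eq_cube)
    have L: "sgate j (pauli n (r, xv, zv) \<psi>) y = (if y ! j then \<i> else 1) * (\<i> ^ r * (Z * sign_of (zv j \<and> y ! j) * sign_of ((zv j \<noteq> xv j) \<and> y ! j)) * \<psi> (xflip xv y))"
      using True by (simp add: sgate_def pauli_apply zc)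
    have R: "pauli n (r + (if xv j then 3 else 0), xv, zv(j := (zv j \<noteq> xv j))) (sgate j \<psi>) y
       = \<i> ^ (r + (if xv j then 3 else 0)) * Z * ((if (y ! j \<noteq> xv j) then \<i> else 1) * \<psi> (xflip xv y))"
      using True jl by (simp add: sgate_def pauli_apply Z_def)
    show ?thesis unfolding L R
      by (cases "xv j"; cases "zv j"; cases "y ! j") (simp_all add: power_add i3 algebra_simps)
  qed
qed

lemma cnot_pauli:
  assumes "a < n" "b < n" "a \<noteq> b"
  shows "cnot a b (pauli n (r, xv, zv) \<psi>) =
         pauli n (r, xv(b := (xv b \<noteq> xv a)), zv(a := (zv a \<noteq> zv b))) (cnot a b \<psi>)"
proof
  fix y
  show "cnot a b (pauli n (r, xv, zv) \<psi>) y =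
         pauli n (r, xv(b := (xv b \<noteq> xv a)), zv(a := (zv a \<noteq> zv b))) (cnot a b \<psi>) y"
  proof (cases "length y = n")
    case False
    then show ?thesis by (simp add: cnot_def pauli_apply)
  next
    case True
    then have al: "a < length y" and bl: "b < length y" using assms by auto
    define y' where "y' = y[b := (y ! b \<noteq> y ! a)]"
    define w where "w = xflip (xv(b := (xv b \<noteq> xv a))) y"
    have fl: "xflip xv y' = w[b := (w ! b \<noteq> w ! a)]"
      unfolding y'_def w_def using al bl assms(3)
      by (intro nth_equalityI) (auto simp: nth_list_update)
    define Z where "Z = zphase n (zv(a := (zv a \<noteq> zv b))) (nth y)"
    have zc: "zphase n zv (nth y') = Z * sign_of (zv a \<and> y ! a) * sign_of ((zv a \<noteq> zv b) \<and> y ! a)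
               * sign_of (zv b \<and> (y ! b \<noteq> y ! a)) * sign_of (zv b \<and> y ! b)"
    proof -
      have "zphase n zv (nth y') = zphase n (zv(a := (zv a \<noteq> zv b))) (nth y) * sign_of (zv a \<and> nth y' a) * sign_of ((zv(a := (zv a \<noteq> zv b))) a \<and> nth y a)
         * sign_of (zv b \<and> nth y' b) * sign_of ((zv(a := (zv a \<noteq> zv b))) b \<and> nth y b)"
        using assms by (rule zphase_update2) (auto simp: nth_list_update y'_def)
      then show ?thesis unfolding Z_def y'_def using al bl assms(3) by (simp add: nth_list_update)
    qed
    have L: "cnot a b (pauli n (r, xv, zv) \<psi>) y = \<i> ^ r * zphase n zv (nth y') * \<psi> (xflip xv y')"
      using True by (simp add: cnot_def pauli_apply y'_def)
    have R: "pauli n (r, xv(b := (xv b \<noteq> xv a)), zv(a := (zv a \<noteq> zv b))) (cnot a b \<psi>) y =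
             \<i> ^ r * Z * \<psi> (w[b := (w ! b \<noteq> w ! a)])"
      using True by (simp add: cnot_def pauli_apply Z_def w_def)
    show ?thesis unfolding L R zc fl
      by (cases "zv a"; cases "zv b"; cases "y ! a"; cases "y ! b") simp_all
  qed
qed

definition pushes_paulis :: "nat \<Rightarrow> (qstate \<Rightarrow> qstate) \<Rightarrow> bool" where
  "pushes_paulis n U \<longleftrightarrow> (\<forall>P. \<exists>P'. \<forall>\<psi>. qstate_on n \<psi> \<longrightarrow> U (pauli n P \<psi>) = pauli n P' (U \<psi>))"

definition pulls_paulis :: "nat \<Rightarrow> (qstate \<Rightarrow> qstate) \<Rightarrow> bool" where
  "pulls_paulis n U \<longleftrightarrow> (\<forall>P. \<exists>P'. \<forall>\<psi>. qstate_on n \<psi> \<longrightarrow> pauli n P (U \<psi>) = U (pauli n P' \<psi>))"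

lemma pushes_paulis_hgate: "j < n \<Longrightarrow> pushes_paulis n (hgate j)"
  unfolding pushes_paulis_def by (metis hgate_pauli prod_cases3)

lemma pushes_paulis_sgate: "j < n \<Longrightarrow> pushes_paulis n (sgate j)"
  unfolding pushes_paulis_def by (metis sgate_pauli prod_cases3)

lemma pushes_paulis_cnot: "a < n \<Longrightarrow> b < n \<Longrightarrow> a \<noteq> b \<Longrightarrow> pushes_paulis n (cnot a b)"
  unfolding pushes_paulis_def by (metis cnot_pauli prod_cases3)

lemma pulls_paulis_involution:
  assumes "pushes_paulis n U" "\<And>\<psi>. qstate_on n \<psi> \<Longrightarrow> U (U \<psi>) = \<psi>" "\<And>\<psi>. qstate_on n \<psi> \<Longrightarrow> qstate_on n (U \<psi>)"
  shows "pulls_paulis n U"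
  unfolding pulls_paulis_def
proof
  fix P
  obtain P' where P': "\<And>\<psi>. qstate_on n \<psi> \<Longrightarrow> U (pauli n P \<psi>) = pauli n P' (U \<psi>)"
    using assms(1) unfolding pushes_paulis_def by blast
  show "\<exists>P'. \<forall>\<psi>. qstate_on n \<psi> \<longrightarrow> pauli n P (U \<psi>) = U (pauli n P' \<psi>)"
  proof (intro exI allI impI)
    fix \<psi> assume v: "qstate_on n \<psi>"
    have "pauli n P (U \<psi>) = U (U (pauli n P (U \<psi>)))" using assms(2) qstate_on_pauli by metis
    also have "\<dots> = U (pauli n P' (U (U \<psi>)))" using P' assms(3)[OF v] by simp
    also have "\<dots> = U (pauli n P' \<psi>)" using assms(2)[OF v] by simp
    finally show "pauli n P (U \<psi>) = U (pauli n P' \<psi>)" .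
  qed
qed

lemma pulls_paulis_hgate: "j < n \<Longrightarrow> pulls_paulis n (hgate j)"
  by (rule pulls_paulis_involution) (auto intro: pushes_paulis_hgate hgate_hgate qstate_on_hgate)

lemma pulls_paulis_cnot: "a < n \<Longrightarrow> b < n \<Longrightarrow> a \<noteq> b \<Longrightarrow> pulls_paulis n (cnot a b)"
  by (rule pulls_paulis_involution) (auto intro: pushes_paulis_cnot cnot_cnot qstate_on_cnot)

text \<open>S is not an involution, but S^{-1} = S^3.\<close>

lemma pulls_paulis_sgate: assumes "j < n" shows "pulls_paulis n (sgate j)"
  unfolding pulls_paulis_def
proof
  fix P
  have f: "pushes_paulis n (sgate j)" using assms by (rule pushes_paulis_sgate)
  obtain P1 where P1: "\<And>\<psi>. qstate_on n \<psi> \<Longrightarrow> sgate j (pauli n P \<psi>) = pauli n P1 (sgate j \<psi>)"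
    using f unfolding pushes_paulis_def by blast
  obtain P2 where P2: "\<And>\<psi>. qstate_on n \<psi> \<Longrightarrow> sgate j (pauli n P1 \<psi>) = pauli n P2 (sgate j \<psi>)"
    using f unfolding pushes_paulis_def by blast
  obtain P3 where P3: "\<And>\<psi>. qstate_on n \<psi> \<Longrightarrow> sgate j (pauli n P2 \<psi>) = pauli n P3 (sgate j \<psi>)"
    using f unfolding pushes_paulis_def by blast
  show "\<exists>P'. \<forall>\<psi>. qstate_on n \<psi> \<longrightarrow> pauli n P (sgate j \<psi>) = sgate j (pauli n P' \<psi>)"
  proof (intro exI allI impI)
    fix \<psi> assume v: "qstate_on n \<psi>"
    let ?S = "sgate j"
    have vs: "qstate_on n (?S \<psi>)" "qstate_on n (?S (?S \<psi>))" "qstate_on n (?S (?S (?S \<psi>)))"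
      using v by (auto intro: qstate_on_sgate)
    have "pauli n P (?S \<psi>) = ?S (?S (?S (?S (pauli n P (?S \<psi>)))))" by (simp add: sgate_order_four)
    also have "\<dots> = ?S (?S (?S (pauli n P1 (?S (?S \<psi>)))))" using P1 vs by simp
    also have "\<dots> = ?S (?S (pauli n P2 (?S (?S (?S \<psi>)))))" using P2 vs by simp
    also have "\<dots> = ?S (pauli n P3 (?S (?S (?S (?S \<psi>)))))" using P3 vs by simp
    also have "\<dots> = ?S (pauli n P3 \<psi>)" by (simp add: sgate_order_four)
    finally show "pauli n P (?S \<psi>) = ?S (pauli n P3 \<psi>)" .
  qed
qed

section \<open>Two invariants of stabilizer states\<close>

definition ket :: "bool list \<Rightarrow> qstate" where
  "ket w = (\<lambda>y. if y = w then 1 else 0)"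

lemma ket0_eq_ket: "ket0 n = ket (replicate n False)"
  by (simp add: ket0_def ket_def)

lemma zphase_cong: "(\<And>i. i < n \<Longrightarrow> x i = x' i) \<Longrightarrow> zphase n z x = zphase n z x'"
  unfolding zphase_def by (intro prod.cong) auto

lemma zphase_False: "zphase n z (\<lambda>_. False) = 1"
  by (simp add: zphase_def)

lemma pauli_ket0: "pauli n (r, xv, zv) (ket0 n) = scale (\<i> ^ r * zphase n zv xv) (ket (map xv [0..<n]))"
proof
  fix y
  show "pauli n (r, xv, zv) (ket0 n) y = scale (\<i> ^ r * zphase n zv xv) (ket (map xv [0..<n])) y"
  proof (cases "length y = n")
    case True
    have eq: "(xflip xv y = replicate n False) \<longleftrightarrow> (y = map xv [0..<n])"
      using True by (auto simp: list_eq_iff_nth_eq)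
    have "y = map xv [0..<n] \<Longrightarrow> zphase n zv (nth y) = zphase n zv xv"
      by (rule zphase_cong) auto
    then show ?thesis using True eq by (auto simp: pauli_apply ket0_eq_ket ket_def scale_def)
  next
    case False
    then show ?thesis by (auto simp: pauli_apply ket_def scale_def)
  qed
qed

definition xgate :: "nat \<Rightarrow> qstate \<Rightarrow> qstate" where
  "xgate a \<psi> = (\<lambda>y. \<psi> (y[a := (\<not> y ! a)]))"

lemma xgate_eq_hssh: assumes "qstate_on n \<psi>" "a < n"
  shows "hgate a (sgate a (sgate a (hgate a \<psi>))) = xgate a \<psi>"
proof
  fix y
  show "hgate a (sgate a (sgate a (hgate a \<psi>))) y = xgate a \<psi> y"
  proof (cases "length y = n")
    case True
    then have al: "a < length y" using assms by simp
    define A where "A = \<psi> (y[a := False])"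
    define B where "B = \<psi> (y[a := True])"
    have e: "hgate a (sgate a (sgate a (hgate a \<psi>))) y =
      ((A + B) / complex_of_real (sqrt 2) + (- (if y ! a then -1 else 1)) * ((A - B) / complex_of_real (sqrt 2))) / complex_of_real (sqrt 2)"
      unfolding hgate_def sgate_def A_def B_def using al by (simp add: algebra_simps)
    have e2: "\<dots> = ((A + B) + (- (if y ! a then -1 else 1)) * (A - B)) / 2"
      by (rule divide_sqrt2_twice)
    show ?thesis
      using e e2 by (cases "y ! a") (auto simp: xgate_def A_def B_def)
  next
    case False
    have "qstate_on n (hgate a (sgate a (sgate a (hgate a \<psi>))))"
      by (intro qstate_on_hgate qstate_on_sgate) (rule assms(1))
    then show ?thesis using assms False
      by (simp add: qstate_onD xgate_def)
  qed
qed

lemma stab_states_xgate: "\<psi> \<in> stab_states n \<Longrightarrow> a < n \<Longrightarrow> xgate a \<psi> \<in> stab_states n"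
  using xgate_eq_hssh[OF stab_states_qstate_on] by (metis stab_states.H stab_states.S)

lemma xgate_pauli: "qstate_on n \<psi> \<Longrightarrow> a < n \<Longrightarrow> xgate a \<psi> = pauli n (0, \<lambda>i. i = a, \<lambda>_. False) \<psi>"
proof
  fix y assume v: "qstate_on n \<psi>" and a: "a < n"
  show "xgate a \<psi> y = pauli n (0, \<lambda>i. i = a, \<lambda>_. False) \<psi> y"
  proof (cases "length y = n")
    case True
    have "xflip (\<lambda>i. i = a) y = y[a := (\<not> y ! a)]"
      using True a by (intro nth_equalityI) (auto simp: nth_list_update)
    then show ?thesis using True by (simp add: xgate_def pauli_apply zphase_def)
  next
    case False
    then show ?thesis using v by (simp add: xgate_def pauli_apply qstate_onD)
  qed
qed

lemma sgate_power: "(sgate j ^^ q) \<psi> y = (if y ! j then \<i> ^ q else 1) * \<psi> y"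
  by (induction q) (auto simp: sgate_def)

lemma stab_states_sgate_power: "\<psi> \<in> stab_states n \<Longrightarrow> j < n \<Longrightarrow> (sgate j ^^ q) \<psi> \<in> stab_states n"
  by (induction q) (auto intro: stab_states.S)

definition cnot_fan_out :: "nat \<Rightarrow> nat list \<Rightarrow> qstate \<Rightarrow> qstate" where
  "cnot_fan_out j ts \<psi> = foldr (\<lambda>t. cnot j t) ts \<psi>"

lemma cnot_fan_out_apply:
  assumes "distinct ts" "j \<notin> set ts"
  shows "cnot_fan_out j ts \<psi> y = \<psi> (map (\<lambda>i. y ! i \<noteq> (i \<in> set ts \<and> y ! j)) [0..<length y])"
  using assms
proof (induction ts arbitrary: y)
  case Nil
  then show ?case by (simp add: cnot_fan_out_def map_nth)
next
  case (Cons t ts)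
  have "cnot_fan_out j (t # ts) \<psi> y = cnot_fan_out j ts \<psi> (y[t := (y ! t \<noteq> y ! j)])"
    by (simp add: cnot_fan_out_def cnot_def)
  also have "\<dots> = \<psi> (map (\<lambda>i. y[t := (y ! t \<noteq> y ! j)] ! i \<noteq> (i \<in> set ts \<and> y[t := (y ! t \<noteq> y ! j)] ! j)) [0..<length y])"
    using Cons by simp
  also have "map (\<lambda>i. y[t := (y ! t \<noteq> y ! j)] ! i \<noteq> (i \<in> set ts \<and> y[t := (y ! t \<noteq> y ! j)] ! j)) [0..<length y]
     = map (\<lambda>i. y ! i \<noteq> (i \<in> set (t # ts) \<and> y ! j)) [0..<length y]"
  proof (intro nth_equalityI)
    fix i assume "i < length (map (\<lambda>i. y[t := (y ! t \<noteq> y ! j)] ! i \<noteq> (i \<in> set ts \<and> y[t := (y ! t \<noteq> y ! j)] ! j)) [0..<length y])"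
    then have i: "i < length y" by simp
    show "map (\<lambda>i. y[t := (y ! t \<noteq> y ! j)] ! i \<noteq> (i \<in> set ts \<and> y[t := (y ! t \<noteq> y ! j)] ! j)) [0..<length y] ! i
      = map (\<lambda>i. y ! i \<noteq> (i \<in> set (t # ts) \<and> y ! j)) [0..<length y] ! i"
      using Cons.prems i by (cases "i = t") (auto simp: nth_list_update_neq)
  qed simp
  finally show ?case .
qed

lemma stab_states_cnot_fan_out: "\<psi> \<in> stab_states n \<Longrightarrow> j < n \<Longrightarrow> \<forall>t\<in>set ts. t < n \<and> t \<noteq> j \<Longrightarrow> cnot_fan_out j ts \<psi> \<in> stab_states n"
  by (induction ts) (auto simp: cnot_fan_out_def intro: stab_states.CNOT)

lemma sgate_power_hgate_ket0:
  assumes "j < n" "length w = n"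
  shows "(sgate j ^^ q) (hgate j (ket0 n)) w
    = (if w ! j then \<i> ^ q else 1) * ((if w[j := False] = replicate n False then 1 else 0) / complex_of_real (sqrt 2))"
proof -
  have "w[j := True] \<noteq> replicate n False"
    using assms by (metis length_list_update nth_list_update_eq nth_replicate)
  then show ?thesis by (simp add: sgate_power hgate_def ket0_def)
qed

lemma ket0_plus_ket_scaled_stab:
  assumes "j0 < n" "xv j0"
  shows "(\<lambda>y. ket (replicate n False) y + \<i> ^ q * ket (map xv [0..<n]) y) \<in> scaled_stab n"
proof -
  define ts where "ts = filter (\<lambda>t. xv t \<and> t \<noteq> j0) [0..<n]"
  define \<Gamma> where "\<Gamma> = cnot_fan_out j0 ts ((sgate j0 ^^ q) (hgate j0 (ket0 n)))"
  have st: "\<Gamma> \<in> stab_states n" unfolding \<Gamma>_def ts_def using assms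
    by (intro stab_states_cnot_fan_out stab_states_sgate_power stab_states.H stab_states.init) auto
  have ts: "distinct ts" "j0 \<notin> set ts" "\<And>i. i \<in> set ts \<longleftrightarrow> xv i \<and> i \<noteq> j0 \<and> i < n"
    unfolding ts_def by auto
  have "\<Gamma> y = (\<lambda>y. ket (replicate n False) y + \<i> ^ q * ket (map xv [0..<n]) y) y / complex_of_real (sqrt 2)" for y
  proof (cases "length y = n")
    case True
    define g where "g = map (\<lambda>i. y ! i \<noteq> (i \<in> set ts \<and> y ! j0)) [0..<length y]"
    have "length g = n" "g ! j0 = y ! j0" using True assms(1) ts(2) by (simp_all add: g_def)
    then have \<Gamma>y: "\<Gamma> y = (if y ! j0 then \<i> ^ q else 1)
        * ((if g[j0 := False] = replicate n False then 1 else 0) / complex_of_real (sqrt 2))"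
      unfolding \<Gamma>_def using cnot_fan_out_apply[OF ts(1,2)] sgate_power_hgate_ket0[OF assms(1)] g_def by simp
    show ?thesis
    proof (cases "y ! j0")
      case False
      then have "g = y" "y[j0 := False] = y" "y \<noteq> map xv [0..<n]"
        using assms list_update_id[of y j0] unfolding g_def by (auto intro: nth_equalityI)
      then show ?thesis using \<Gamma>y False by (simp add: ket_def)
    next
      case True2: True
      have "g[j0 := False] = replicate n False \<longleftrightarrow> y = map xv [0..<n]"
        unfolding g_def using True True2 assms ts(3)
        by (auto simp: list_eq_iff_nth_eq nth_list_update) (metis)+
      moreover have "y \<noteq> replicate n False" using True2 assms(1) by auto
      ultimately show ?thesis using \<Gamma>y True2 by (simp add: ket_def)
    qed
  qed (use stab_states_qstate_on[OF st] in \<open>auto simp: qstate_onD ket_def\<close>)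
  then have "scale (complex_of_real (sqrt 2)) \<Gamma> = (\<lambda>y. ket (replicate n False) y + \<i> ^ q * ket (map xv [0..<n]) y)"
    by (simp add: scale_def)
  with scaled_stabI[OF st] show ?thesis by metis
qed

definition plus_pauli_in_scaled_stab :: "nat \<Rightarrow> qstate \<Rightarrow> bool" where
  "plus_pauli_in_scaled_stab n \<phi> \<longleftrightarrow> (\<forall>P. (\<lambda>y. \<phi> y + pauli n P \<phi> y) \<in> scaled_stab n)"

lemma plus_pauli_in_scaled_stab_step:
  assumes "plus_pauli_in_scaled_stab n \<phi>" "qstate_on n \<phi>" "pulls_paulis n U"
    and add: "\<And>f g. U (\<lambda>y. f y + g y) = (\<lambda>y. U f y + U g y)"
    and pres: "\<And>\<psi>. \<psi> \<in> scaled_stab n \<Longrightarrow> U \<psi> \<in> scaled_stab n"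
  shows "plus_pauli_in_scaled_stab n (U \<phi>)"
  unfolding plus_pauli_in_scaled_stab_def
proof
  fix P
  obtain P' where P': "\<And>\<psi>. qstate_on n \<psi> \<Longrightarrow> pauli n P (U \<psi>) = U (pauli n P' \<psi>)"
    using assms(3) unfolding pulls_paulis_def by blast
  have "(\<lambda>y. U \<phi> y + pauli n P (U \<phi>) y) = U (\<lambda>y. \<phi> y + pauli n P' \<phi> y)"
    using P'[OF assms(2)] add by simp
  moreover have "U (\<lambda>y. \<phi> y + pauli n P' \<phi> y) \<in> scaled_stab n"
    using assms(1) pres unfolding plus_pauli_in_scaled_stab_def by blast
  ultimately show "(\<lambda>y. U \<phi> y + pauli n P (U \<phi>) y) \<in> scaled_stab n" by simp
qed

lemma plus_pauli_in_scaled_stab_ket0: "plus_pauli_in_scaled_stab n (ket0 n)"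
  unfolding plus_pauli_in_scaled_stab_def
proof
  fix P :: "nat \<times> (nat \<Rightarrow> bool) \<times> (nat \<Rightarrow> bool)"
  obtain r xv zv where P: "P = (r, xv, zv)" by (cases P)
  obtain e :: nat where "zphase n zv xv = (-1) ^ e" using zphase_eq_neg_one_power by blast
  then obtain q where q: "\<i> ^ r * zphase n zv xv = \<i> ^ q" by (metis power_add power_mult power2_i)
  show "(\<lambda>y. ket0 n y + pauli n P (ket0 n) y) \<in> scaled_stab n"
  proof (cases "\<exists>j0<n. xv j0")
    case True
    then obtain j0 where "j0 < n" "xv j0" by blast
    have "pauli n P (ket0 n) = scale (\<i> ^ q) (ket (map xv [0..<n]))"
      by (simp add: P pauli_ket0 q)
    then show ?thesis using ket0_plus_ket_scaled_stab[of j0 n xv q, OF \<open>j0 < n\<close> \<open>xv j0\<close>]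
      by (simp add: ket0_eq_ket scale_def)
  next
    case False
    then have "map xv [0..<n] = replicate n False" by (auto simp: list_eq_iff_nth_eq)
    moreover have "pauli n P (ket0 n) = scale (\<i> ^ q) (ket (map xv [0..<n]))"
      by (simp add: P pauli_ket0 q)
    ultimately have "(\<lambda>y. ket0 n y + pauli n P (ket0 n) y) = scale (1 + \<i> ^ q) (ket0 n)"
      by (auto simp: ket0_eq_ket scale_def algebra_simps)
    then show ?thesis by (simp add: scaled_stabI stab_states.init)
  qed
qed

lemma plus_pauli_in_scaled_stab_stab_states: "\<phi> \<in> stab_states n \<Longrightarrow> plus_pauli_in_scaled_stab n \<phi>"
proof (induction rule: stab_states.induct)
  case init
  then show ?case by (rule plus_pauli_in_scaled_stab_ket0)
next
  case (H \<psi> j)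
  show ?case
    by (rule plus_pauli_in_scaled_stab_step[OF H.IH stab_states_qstate_on[OF H.hyps(1)] pulls_paulis_hgate[OF H.hyps(2)] hgate_add])
       (simp add: scaled_stab_hgate H.hyps(2))
next
  case (S \<psi> j)
  show ?case
    by (rule plus_pauli_in_scaled_stab_step[OF S.IH stab_states_qstate_on[OF S.hyps(1)] pulls_paulis_sgate[OF S.hyps(2)] sgate_add])
       (simp add: scaled_stab_sgate S.hyps(2))
next
  case (CNOT \<psi> a b)
  show ?case
    by (rule plus_pauli_in_scaled_stab_step[OF CNOT.IH stab_states_qstate_on[OF CNOT.hyps(1)] pulls_paulis_cnot[OF CNOT.hyps(2-4)] cnot_add])
       (simp add: scaled_stab_cnot CNOT.hyps(2-4))
qed

lemma stab_plus_pauli_scaled_stab: "\<phi> \<in> stab_states n \<Longrightarrow> (\<lambda>y. \<phi> y + pauli n P \<phi> y) \<in> scaled_stab n"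
  using plus_pauli_in_scaled_stab_stab_states unfolding plus_pauli_in_scaled_stab_def by blast

definition eigen_or_anticomm :: "nat \<Rightarrow> qstate \<Rightarrow> bool" where
  "eigen_or_anticomm n \<phi> \<longleftrightarrow> (\<forall>P. (\<exists>l. pauli n P \<phi> = scale l \<phi>) \<or>
      (\<exists>g. pauli n g \<phi> = \<phi> \<and> pauli n P (pauli n g \<phi>) = scale (-1) (pauli n g (pauli n P \<phi>))))"

lemma eigen_or_anticomm_step:
  assumes "eigen_or_anticomm n \<phi>" "qstate_on n \<phi>" "pulls_paulis n U" "pushes_paulis n U"
    and sm: "\<And>c f. U (scale c f) = scale c (U f)"
  shows "eigen_or_anticomm n (U \<phi>)"
  unfolding eigen_or_anticomm_def
proof
  fix P
  obtain P' where P': "\<And>\<psi>. qstate_on n \<psi> \<Longrightarrow> pauli n P (U \<psi>) = U (pauli n P' \<psi>)"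
    using assms(3) unfolding pulls_paulis_def by blast
  from assms(1) have "(\<exists>l. pauli n P' \<phi> = scale l \<phi>) \<or>
      (\<exists>g. pauli n g \<phi> = \<phi> \<and> pauli n P' (pauli n g \<phi>) = scale (-1) (pauli n g (pauli n P' \<phi>)))"
    unfolding eigen_or_anticomm_def by blast
  then show "(\<exists>l. pauli n P (U \<phi>) = scale l (U \<phi>)) \<or>
      (\<exists>g. pauli n g (U \<phi>) = U \<phi> \<and> pauli n P (pauli n g (U \<phi>)) = scale (-1) (pauli n g (pauli n P (U \<phi>))))"
  proof
    assume "\<exists>l. pauli n P' \<phi> = scale l \<phi>"
    then obtain l where "pauli n P' \<phi> = scale l \<phi>" by blast
    then have "pauli n P (U \<phi>) = scale l (U \<phi>)" using P'[OF assms(2)] sm by simp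
    then show ?thesis by blast
  next
    assume "\<exists>g. pauli n g \<phi> = \<phi> \<and> pauli n P' (pauli n g \<phi>) = scale (-1) (pauli n g (pauli n P' \<phi>))"
    then obtain g where g1: "pauli n g \<phi> = \<phi>" and g2: "pauli n P' (pauli n g \<phi>) = scale (-1) (pauli n g (pauli n P' \<phi>))"
      by blast
    obtain g' where g': "\<And>\<psi>. qstate_on n \<psi> \<Longrightarrow> U (pauli n g \<psi>) = pauli n g' (U \<psi>)"
      using assms(4) unfolding pushes_paulis_def by blast
    have h1: "pauli n g' (U \<phi>) = U \<phi>" using g'[OF assms(2)] g1 by simp
    have "pauli n P (pauli n g' (U \<phi>)) = pauli n P (U (pauli n g \<phi>))" using g'[OF assms(2)] by simp
    also have "\<dots> = U (pauli n P' (pauli n g \<phi>))" using P' qstate_on_pauli by blast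
    also have "\<dots> = scale (-1) (U (pauli n g (pauli n P' \<phi>)))" using g2 sm by simp
    also have "\<dots> = scale (-1) (pauli n g' (U (pauli n P' \<phi>)))" using g' qstate_on_pauli by simp
    also have "\<dots> = scale (-1) (pauli n g' (pauli n P (U \<phi>)))" using P'[OF assms(2)] by simp
    finally show ?thesis using h1 by blast
  qed
qed

lemma eigen_or_anticomm_ket0: "eigen_or_anticomm n (ket0 n)"
  unfolding eigen_or_anticomm_def
proof
  fix P :: "nat \<times> (nat \<Rightarrow> bool) \<times> (nat \<Rightarrow> bool)"
  obtain r xv zv where P: "P = (r, xv, zv)" by (cases P)
  show "(\<exists>l. pauli n P (ket0 n) = scale l (ket0 n)) \<or>
      (\<exists>g. pauli n g (ket0 n) = ket0 n \<and> pauli n P (pauli n g (ket0 n)) = scale (-1) (pauli n g (pauli n P (ket0 n))))"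
  proof (cases "\<exists>j0<n. xv j0")
    case True
    then obtain j0 where j0: "j0 < n" "xv j0" by blast
    define g where "g = (0::nat, \<lambda>_::nat. False, \<lambda>i. i = j0)"
    have g1: "pauli n g (ket0 n) = ket0 n"
      unfolding g_def pauli_ket0 by (simp add: zphase_False scale_def ket0_eq_ket map_replicate_const)
    have g2: "pauli n g (ket (map xv [0..<n])) = scale (-1) (ket (map xv [0..<n]))"
    proof
      fix y
      show "pauli n g (ket (map xv [0..<n])) y = scale (-1) (ket (map xv [0..<n])) y"
      proof (cases "y = map xv [0..<n]")
        case True
        have "zphase n (\<lambda>i. i = j0) (nth y) = sign_of True * (\<Prod>i\<in>{..<n}-{j0}. sign_of ((i = j0) \<and> y ! i))"
          using zphase_remove[OF j0(1)] True j0 by simp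
        also have "(\<Prod>i\<in>{..<n}-{j0}. sign_of ((i = j0) \<and> y ! i)) = 1" by (intro prod.neutral) auto
        finally have "zphase n (\<lambda>i. i = j0) (nth y) = -1" by simp
        then show ?thesis using True by (simp add: g_def pauli_apply xflip_False ket_def scale_def)
      next
        case False
        then show ?thesis by (simp add: g_def pauli_apply xflip_False ket_def scale_def)
      qed
    qed
    have "pauli n P (pauli n g (ket0 n)) = scale (-1) (pauli n g (pauli n P (ket0 n)))"
      unfolding g1 P pauli_ket0 pauli_scale g2 by (simp add: scale_def algebra_simps)
    then show ?thesis using g1 by blast
  next
    case False
    then have "map xv [0..<n] = replicate n False" by (auto simp: list_eq_iff_nth_eq)
    moreover have "pauli n P (ket0 n) = scale (\<i> ^ r * zphase n zv xv) (ket (map xv [0..<n]))"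
      by (simp add: P pauli_ket0)
    ultimately have "pauli n P (ket0 n) = scale (\<i> ^ r * zphase n zv xv) (ket0 n)"
      by (simp add: ket0_eq_ket)
    then show ?thesis by blast
  qed
qed

lemma eigen_or_anticomm_stab_states: "\<phi> \<in> stab_states n \<Longrightarrow> eigen_or_anticomm n \<phi>"
proof (induction rule: stab_states.induct)
  case init
  then show ?case by (rule eigen_or_anticomm_ket0)
next
  case (H \<psi> j)
  show ?case
    by (rule eigen_or_anticomm_step[OF H.IH stab_states_qstate_on[OF H.hyps(1)] pulls_paulis_hgate[OF H.hyps(2)] pushes_paulis_hgate[OF H.hyps(2)] hgate_scale])
next
  case (S \<psi> j)
  show ?case
    by (rule eigen_or_anticomm_step[OF S.IH stab_states_qstate_on[OF S.hyps(1)] pulls_paulis_sgate[OF S.hyps(2)] pushes_paulis_sgate[OF S.hyps(2)] sgate_scale])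
next
  case (CNOT \<psi> a b)
  show ?case
    by (rule eigen_or_anticomm_step[OF CNOT.IH stab_states_qstate_on[OF CNOT.hyps(1)] pulls_paulis_cnot[OF CNOT.hyps(2-4)] pushes_paulis_cnot[OF CNOT.hyps(2-4)] cnot_scale])
qed

lemma list_update_snoc: "j < length z \<Longrightarrow> (z @ [c])[j := v] = z[j := v] @ [c]"
  by (simp add: list_update_append)

lemma list_update_snoc_last: "(z @ [c])[length z := v] = z @ [v]"
  by (simp add: list_update_append)

lemma pauli_square:
  assumes "qstate_on n \<psi>"
  shows "\<exists>e::nat. pauli n Q (pauli n Q \<psi>) = scale ((-1) ^ e) \<psi>"
proof -
  obtain r x z where Q: "Q = (r, x, z)" by (cases Q)
  obtain e :: nat where e: "zphase n z x = (-1) ^ e" using zphase_eq_neg_one_power by blast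
  have "pauli n Q (pauli n Q \<psi>) y = (-1) ^ (r + e) * \<psi> y" for y
  proof (cases "length y = n")
    case True
    have "xflip x (xflip x y) = y" by (rule nth_equalityI) auto
    then have "pauli n Q (pauli n Q \<psi>) y
        = (\<i> ^ r * \<i> ^ r) * zphase n z x * (zphase n z (nth y) * zphase n z (nth y)) * \<psi> y"
      using True by (simp add: Q pauli_apply zphase_xflip algebra_simps)
    then show ?thesis by (simp add: zphase_square e power_add flip: power_mult_distrib)
  qed (use qstate_onD[OF assms] in \<open>simp add: Q pauli_apply\<close>)
  then show ?thesis by (auto simp: scale_def)
qed

lemma pauli_eigenvalues:
  assumes "qstate_on n \<phi>" "\<exists>y. \<phi> y \<noteq> 0" "pauli n Q \<phi> = scale l \<phi>"
  shows "l = 1 \<or> l = -1 \<or> l = \<i> \<or> l = -\<i>"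
proof -
  obtain e :: nat where e: "pauli n Q (pauli n Q \<phi>) = scale ((-1) ^ e) \<phi>"
    using pauli_square[OF assms(1)] by blast
  obtain y where y: "\<phi> y \<noteq> 0" using assms(2) by blast
  have "pauli n Q (pauli n Q \<phi>) = scale (l * l) \<phi>"
    using assms(3) by (simp add: pauli_scale scale_scale)
  then have "l * l * \<phi> y = (-1) ^ e * \<phi> y" using e by (metis scale_def)
  then have "l * l = (-1) ^ e" using y by simp
  then have "l * l = 1 \<or> l * l = -1" by (metis neg_one_even_power neg_one_odd_power)
  then show ?thesis
  proof
    assume "l * l = 1"
    then have "(l - 1) * (l + 1) = 0" by (simp add: algebra_simps)
    then show ?thesis by (auto simp: eq_neg_iff_add_eq_0)
  next
    assume "l * l = -1"
    then have "(l - \<i>) * (l + \<i>) = 0" by (simp add: algebra_simps)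
    then show ?thesis by (auto simp: eq_neg_iff_add_eq_0)
  qed
qed

section \<open>Fixing the last qubit\<close>

definition join_last :: "nat \<Rightarrow> qstate \<Rightarrow> qstate \<Rightarrow> qstate" where
  "join_last n f g = (\<lambda>y. if length y = Suc n then (if last y then g else f) (butlast y) else 0)"

lemma join_last_snoc [simp]:
  "join_last n f g (z @ [c]) = (if length z = n then if c then g z else f z else 0)"
  by (simp add: join_last_def)

lemma join_last_Nil [simp]: "join_last n f g [] = 0"
  by (simp add: join_last_def)

lemma fun_eq_snoc:
  assumes "f [] = g []" "\<And>z c. f (z @ [c]) = g (z @ [c])"
  shows "f = g"
proof
  fix y show "f y = g y" using assms by (cases y rule: rev_exhaust) auto
qed

lemma join_last_scale: "join_last n (scale c f) (scale c g) = scale c (join_last n f g)"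
  by (rule fun_eq_snoc) (simp_all add: scale_def)

lemma join_last_eqI:
  "(\<And>z. length z = n \<Longrightarrow> f z = f' z) \<Longrightarrow> (\<And>z. length z = n \<Longrightarrow> g z = g' z) \<Longrightarrow> join_last n f g = join_last n f' g'"
  by (rule fun_eq_snoc) auto

lemma ket0_Suc: "ket0 (Suc n) = join_last n (ket0 n) (\<lambda>_. 0)"
  by (rule fun_eq_snoc) (auto simp: ket0_def replicate_append_same[symmetric])

lemma hgate_join_last_low:
  assumes "j < n"
  shows "hgate j (join_last n f g) = join_last n (hgate j f) (hgate j g)"
proof (rule fun_eq_snoc)
  show "hgate j (join_last n f g) (z @ [c]) = join_last n (hgate j f) (hgate j g) (z @ [c])" for z c
    using assms by (cases "length z = n") (simp_all add: hgate_def list_update_snoc nth_append join_last_def)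
qed (simp add: hgate_def join_last_def)

lemma sgate_join_last_low:
  assumes "j < n"
  shows "sgate j (join_last n f g) = join_last n (sgate j f) (sgate j g)"
proof (rule fun_eq_snoc)
  show "sgate j (join_last n f g) (z @ [c]) = join_last n (sgate j f) (sgate j g) (z @ [c])" for z c
    using assms by (cases "length z = n") (simp_all add: sgate_def nth_append)
qed (simp add: sgate_def)

lemma cnot_join_last_low:
  assumes "a < n" "b < n"
  shows "cnot a b (join_last n f g) = join_last n (cnot a b f) (cnot a b g)"
proof (rule fun_eq_snoc)
  show "cnot a b (join_last n f g) (z @ [c]) = join_last n (cnot a b f) (cnot a b g) (z @ [c])" for z c
    using assms by (cases "length z = n") (simp_all add: cnot_def list_update_snoc nth_append join_last_def)
qed (simp add: cnot_def join_last_def)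

lemma hgate_join_last:
  "hgate n (join_last n f g) = scale (1 / complex_of_real (sqrt 2)) (join_last n (\<lambda>y. f y + g y) (\<lambda>y. f y - g y))"
proof (rule fun_eq_snoc)
  fix z c
  show "hgate n (join_last n f g) (z @ [c])
      = scale (1 / complex_of_real (sqrt 2)) (join_last n (\<lambda>y. f y + g y) (\<lambda>y. f y - g y)) (z @ [c])"
  proof (cases "length z = n")
    case True
    then have "(z @ [c])[n := b] = z @ [b]" for b using list_update_snoc_last by metis
    then show ?thesis using True by (cases c) (auto simp: hgate_def scale_def nth_append field_simps)
  qed (simp add: hgate_def scale_def join_last_def)
qed (simp add: hgate_def scale_def)

lemma sgate_join_last: "sgate n (join_last n f g) = join_last n f (scale \<i> g)"
  by (rule fun_eq_snoc) (auto simp: sgate_def scale_def nth_append)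

lemma cnot_join_last:
  assumes "a < n"
  shows "cnot n a (join_last n f g) = join_last n f (xgate a g)"
proof (rule fun_eq_snoc)
  show "cnot n a (join_last n f g) (z @ [c]) = join_last n f (xgate a g) (z @ [c])" for z c
    using assms by (cases "length z = n") (auto simp: cnot_def xgate_def list_update_snoc nth_append join_last_def)
qed (simp add: cnot_def join_last_def)

definition czgate :: "nat \<Rightarrow> nat \<Rightarrow> qstate \<Rightarrow> qstate" where
  "czgate a b \<psi> = (\<lambda>y. sign_of (y ! a \<and> y ! b) * \<psi> y)"

definition zgate :: "nat \<Rightarrow> qstate \<Rightarrow> qstate" where
  "zgate a \<psi> = (\<lambda>y. sign_of (y ! a) * \<psi> y)"

lemma czgate_join_last:
  assumes "a < n"
  shows "czgate a n (join_last n f g) = join_last n f (zgate a g)"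
proof (rule fun_eq_snoc)
  show "czgate a n (join_last n f g) (z @ [c]) = join_last n f (zgate a g) (z @ [c])" for z c
    using assms by (cases "length z = n") (auto simp: czgate_def zgate_def nth_append)
qed (simp add: czgate_def)

text \<open>Every stabilizer state on n + 1 qubits has one of these shapes, with \<phi> a stabilizer state on
  the first n qubits and P a Pauli operator; fixing the last qubit of such a state leaves a
  multiple of a stabilizer state.\<close>

definition last_qubit_form :: "nat \<Rightarrow> qstate \<Rightarrow> bool" where
  "last_qubit_form n \<Phi> \<longleftrightarrow> (\<exists>\<phi> s. \<phi> \<in> stab_states n \<and>
     (\<Phi> = scale s (join_last n \<phi> (\<lambda>_. 0)) \<or> \<Phi> = scale s (join_last n (\<lambda>_. 0) \<phi>) \<or>
      (\<exists>Q. \<Phi> = scale s (join_last n \<phi> (pauli n Q \<phi>)))))"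

lemma last_qubit_formI:
  "\<phi> \<in> stab_states n \<Longrightarrow> last_qubit_form n (scale s (join_last n \<phi> (\<lambda>_. 0)))"
  "\<phi> \<in> stab_states n \<Longrightarrow> last_qubit_form n (scale s (join_last n (\<lambda>_. 0) \<phi>))"
  "\<phi> \<in> stab_states n \<Longrightarrow> last_qubit_form n (scale s (join_last n \<phi> (pauli n Q \<phi>)))"
  unfolding last_qubit_form_def by blast+

lemma last_qubit_formE:
  assumes "last_qubit_form n \<Phi>"
  obtains (zero) \<phi> s where "\<phi> \<in> stab_states n" "\<Phi> = scale s (join_last n \<phi> (\<lambda>_. 0))"
    | (one) \<phi> s where "\<phi> \<in> stab_states n" "\<Phi> = scale s (join_last n (\<lambda>_. 0) \<phi>)"
    | (pauli) \<phi> s Q where "\<phi> \<in> stab_states n" "\<Phi> = scale s (join_last n \<phi> (pauli n Q \<phi>))"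
  using assms unfolding last_qubit_form_def by blast

lemma last_qubit_form_scale: "last_qubit_form n \<Phi> \<Longrightarrow> last_qubit_form n (scale c \<Phi>)"
  unfolding last_qubit_form_def by (metis scale_scale)

lemma last_qubit_form_zero: "last_qubit_form n (\<lambda>_. 0)"
  using last_qubit_formI(1)[OF stab_states.init, of n 0] by (simp add: scale_def)

lemma last_qubit_form_low_gate:
  assumes "last_qubit_form n \<Phi>" "pushes_paulis n U"
    and U_join: "\<And>f g. U (join_last n f g) = join_last n (U f) (U g)"
    and U_scale: "\<And>c f. U (scale c f) = scale c (U f)"
    and U_stab: "\<And>\<phi>. \<phi> \<in> stab_states n \<Longrightarrow> U \<phi> \<in> stab_states n"
  shows "last_qubit_form n (U \<Phi>)"
proof -
  have U0: "U (\<lambda>_. 0) = (\<lambda>_. 0)" using U_scale[of 0 "\<lambda>_. 0"] by (simp add: scale_def)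
  from assms(1) show ?thesis
  proof (cases rule: last_qubit_formE)
    case (pauli \<phi> s Q)
    obtain Q' where "\<And>\<psi>. qstate_on n \<psi> \<Longrightarrow> U (pauli n Q \<psi>) = pauli n Q' (U \<psi>)"
      using assms(2) unfolding pushes_paulis_def by blast
    then show ?thesis
      using pauli by (simp add: U_scale U_join U_stab stab_states_qstate_on last_qubit_formI(3))
  qed (simp_all add: U_scale U_join U0 U_stab last_qubit_formI(1,2))
qed

lemma last_qubit_form_hgate_low: "last_qubit_form n \<Phi> \<Longrightarrow> j < n \<Longrightarrow> last_qubit_form n (hgate j \<Phi>)"
  by (rule last_qubit_form_low_gate)
    (auto simp: pushes_paulis_hgate hgate_join_last_low hgate_scale intro: stab_states.H)

lemma last_qubit_form_sgate_low: "last_qubit_form n \<Phi> \<Longrightarrow> j < n \<Longrightarrow> last_qubit_form n (sgate j \<Phi>)"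
  by (rule last_qubit_form_low_gate)
    (auto simp: pushes_paulis_sgate sgate_join_last_low sgate_scale intro: stab_states.S)

lemma last_qubit_form_cnot_low:
  "last_qubit_form n \<Phi> \<Longrightarrow> a < n \<Longrightarrow> b < n \<Longrightarrow> a \<noteq> b \<Longrightarrow> last_qubit_form n (cnot a b \<Phi>)"
  by (rule last_qubit_form_low_gate)
    (auto simp: pushes_paulis_cnot cnot_join_last_low cnot_scale intro: stab_states.CNOT)

lemma last_qubit_form_controlled:
  assumes "last_qubit_form n \<Phi>"
    and U_scale: "\<And>c f. U (scale c f) = scale c (U f)"
    and U_join: "\<And>f g. U (join_last n f g) = join_last n f (T g)"
    and T_scale: "\<And>c f. T (scale c f) = scale c (T f)"
    and T_stab: "\<And>\<phi>. \<phi> \<in> stab_states n \<Longrightarrow> T \<phi> \<in> scaled_stab n"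
    and T_pauli: "\<And>Q. \<exists>R. \<forall>\<phi>. qstate_on n \<phi> \<longrightarrow> T (pauli n Q \<phi>) = pauli n R \<phi>"
  shows "last_qubit_form n (U \<Phi>)"
proof -
  have T0: "T (\<lambda>_. 0) = (\<lambda>_. 0)" using T_scale[of 0 "\<lambda>_. 0"] by (simp add: scale_def)
  from assms(1) show ?thesis
  proof (cases rule: last_qubit_formE)
    case (one \<phi> s)
    obtain c \<phi>' where \<phi>': "\<phi>' \<in> stab_states n" "T \<phi> = scale c \<phi>'" using T_stab[OF one(1)] by (rule scaled_stabE)
    have "join_last n (\<lambda>_. 0) (scale c \<phi>') = scale c (join_last n (\<lambda>_. 0) \<phi>')"
      using join_last_scale[of n c "\<lambda>_. 0" \<phi>'] by (simp add: scale_def)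
    then have "U \<Phi> = scale (s * c) (join_last n (\<lambda>_. 0) \<phi>')" using one \<phi>' by (simp add: U_scale U_join scale_scale)
    then show ?thesis using \<phi>' by (simp add: last_qubit_formI(2))
  next
    case (pauli \<phi> s Q)
    obtain R where "\<And>\<phi>. qstate_on n \<phi> \<Longrightarrow> T (pauli n Q \<phi>) = pauli n R \<phi>" using T_pauli by blast
    then show ?thesis
      using pauli by (simp add: U_scale U_join stab_states_qstate_on last_qubit_formI(3))
  qed (simp add: U_scale U_join T0 last_qubit_formI(1))
qed

lemma pauli_Suc: "pauli n (Suc r, xv, zv) \<psi> = scale \<i> (pauli n (r, xv, zv) \<psi>)"
  by (auto simp: pauli_apply scale_def)

lemma last_qubit_form_sgate_last: "last_qubit_form n \<Phi> \<Longrightarrow> last_qubit_form n (sgate n \<Phi>)"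
proof (erule last_qubit_form_controlled[where T = "scale \<i>"])
  show "sgate n (join_last n f g) = join_last n f (scale \<i> g)" for f g by (rule sgate_join_last)
  show "scale \<i> (scale c f) = scale c (scale \<i> f)" for c f by (simp add: scale_scale mult.commute)
  show "scale \<i> \<phi> \<in> scaled_stab n" if "\<phi> \<in> stab_states n" for \<phi> using that by (rule scaled_stabI)
  show "\<exists>R. \<forall>\<phi>. qstate_on n \<phi> \<longrightarrow> scale \<i> (pauli n Q \<phi>) = pauli n R \<phi>" for Q
    by (cases Q) (metis pauli_Suc)
qed (rule sgate_scale)

lemma xgate_scale: "xgate a (scale c f) = scale c (xgate a f)"
  by (simp add: xgate_def scale_def)

lemma last_qubit_form_cnot_last:
  assumes "last_qubit_form n \<Phi>" "a < n"
  shows "last_qubit_form n (cnot n a \<Phi>)"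
proof (rule last_qubit_form_controlled[where T = "xgate a", OF assms(1)])
  show "cnot n a (join_last n f g) = join_last n f (xgate a g)" for f g using assms(2) by (rule cnot_join_last)
  show "xgate a \<phi> \<in> scaled_stab n" if "\<phi> \<in> stab_states n" for \<phi>
    using that assms(2) by (intro stab_in_scaled_stab stab_states_xgate)
  show "\<exists>R. \<forall>\<phi>. qstate_on n \<phi> \<longrightarrow> xgate a (pauli n Q \<phi>) = pauli n R \<phi>" for Q
  proof -
    obtain R where "\<And>\<psi>. pauli n (0, \<lambda>i. i = a, \<lambda>_. False) (pauli n Q \<psi>) = pauli n R \<psi>"
      using pauli_compose by blast
    then show ?thesis using xgate_pauli[OF qstate_on_pauli assms(2)] by metis
  qed
qed (simp_all add: cnot_scale xgate_scale)

lemma zgate_eq_sgate_sgate: "zgate a \<psi> = sgate a (sgate a \<psi>)"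
  by (auto simp: zgate_def sgate_def)

lemma zgate_pauli: "qstate_on n \<psi> \<Longrightarrow> a < n \<Longrightarrow> zgate a \<psi> = pauli n (0, \<lambda>_. False, \<lambda>i. i = a) \<psi>"
proof
  fix y assume v: "qstate_on n \<psi>" and a: "a < n"
  show "zgate a \<psi> y = pauli n (0, \<lambda>_. False, \<lambda>i. i = a) \<psi> y"
  proof (cases "length y = n")
    case True
    have "zphase n (\<lambda>i. i = a) (nth y) = sign_of (y ! a) * (\<Prod>i\<in>{..<n}-{a}. sign_of ((i = a) \<and> y ! i))"
      using zphase_remove[OF a] by simp
    also have "(\<Prod>i\<in>{..<n}-{a}. sign_of ((i = a) \<and> y ! i)) = 1" by (intro prod.neutral) auto
    finally show ?thesis using True by (simp add: zgate_def pauli_apply xflip_False)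
  qed (use v in \<open>simp add: zgate_def pauli_apply qstate_onD\<close>)
qed

lemma last_qubit_form_czgate_last:
  assumes "last_qubit_form n \<Phi>" "a < n"
  shows "last_qubit_form n (czgate a n \<Phi>)"
proof (rule last_qubit_form_controlled[where T = "zgate a", OF assms(1)])
  show "czgate a n (scale c f) = scale c (czgate a n f)" for c f by (simp add: czgate_def scale_def algebra_simps)
  show "czgate a n (join_last n f g) = join_last n f (zgate a g)" for f g using assms(2) by (rule czgate_join_last)
  show "zgate a (scale c f) = scale c (zgate a f)" for c f by (simp add: zgate_def scale_def algebra_simps)
  show "zgate a \<phi> \<in> scaled_stab n" if "\<phi> \<in> stab_states n" for \<phi>
    using that assms(2) by (simp add: zgate_eq_sgate_sgate stab_in_scaled_stab stab_states.S)
  show "\<exists>R. \<forall>\<phi>. qstate_on n \<phi> \<longrightarrow> zgate a (pauli n Q \<phi>) = pauli n R \<phi>" for Q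
  proof -
    obtain R where "\<And>\<psi>. pauli n (0, \<lambda>_. False, \<lambda>i. i = a) (pauli n Q \<psi>) = pauli n R \<psi>"
      using pauli_compose by blast
    then show ?thesis using zgate_pauli[OF qstate_on_pauli assms(2)] by metis
  qed
qed

lemma last_qubit_form_eigen:
  assumes \<phi>: "\<phi> \<in> stab_states n" and l: "pauli n Q \<phi> = scale l \<phi>"
  shows "last_qubit_form n (join_last n (\<lambda>y. \<phi> y + pauli n Q \<phi> y) (\<lambda>y. \<phi> y - pauli n Q \<phi> y))"
proof (cases "\<exists>y. \<phi> y \<noteq> 0")
  case False
  then have "join_last n (\<lambda>y. \<phi> y + pauli n Q \<phi> y) (\<lambda>y. \<phi> y - pauli n Q \<phi> y) = (\<lambda>_. 0)"
    by (auto simp: l scale_def join_last_def)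
  then show ?thesis by (simp add: last_qubit_form_zero)
next
  case True
  have v: "qstate_on n \<phi>" using \<phi> by (rule stab_states_qstate_on)
  have join: "join_last n (\<lambda>y. \<phi> y + pauli n Q \<phi> y) (\<lambda>y. \<phi> y - pauli n Q \<phi> y)
      = scale c (join_last n (scale a \<phi>) (scale b \<phi>))" if "c * a = 1 + l" "c * b = 1 - l" for a b c
    unfolding join_last_scale[symmetric]
    by (intro join_last_eqI) (simp_all add: l scale_def mult.assoc[symmetric] ring_distribs that)
  have "l = 1 \<or> l = -1 \<or> l = \<i> \<or> l = -\<i>" by (rule pauli_eigenvalues[OF v True l])
  then show ?thesis
  proof (elim disjE)
    assume "l = 1"
    then show ?thesis using join[of 2 1 0] last_qubit_formI(1)[OF \<phi>] by (simp add: scale_def)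
  next
    assume "l = -1"
    then show ?thesis using join[of 2 0 1] last_qubit_formI(2)[OF \<phi>] by (simp add: scale_def)
  next
    assume "l = \<i>"
    then show ?thesis
      using join[of "1 + \<i>" 1 "- \<i>"] last_qubit_formI(3)[OF \<phi>, of "1 + \<i>" "(3, \<lambda>_. False, \<lambda>_. False)"]
      by (simp add: pauli_identity[OF v] power3_eq_cube scale_one algebra_simps)
  next
    assume "l = -\<i>"
    then show ?thesis
      using join[of "1 - \<i>" 1 \<i>] last_qubit_formI(3)[OF \<phi>, of "1 - \<i>" "(1, \<lambda>_. False, \<lambda>_. False)"]
      by (simp add: pauli_identity[OF v] scale_one algebra_simps)
  qed
qed

text \<open>If the Pauli operator P does not have \<phi> as an eigenvector, it anticommutes with a stabilizer g
  of \<phi>; then g maps \<phi> + P\<phi> to \<phi> - P\<phi>, and \<phi> + P\<phi> is itself a multiple of a stabilizer state.\<close>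

lemma last_qubit_form_hadamard_mix:
  assumes \<phi>: "\<phi> \<in> stab_states n"
  shows "last_qubit_form n (join_last n (\<lambda>y. \<phi> y + pauli n Q \<phi> y) (\<lambda>y. \<phi> y - pauli n Q \<phi> y))"
proof -
  have "eigen_or_anticomm n \<phi>" using \<phi> by (rule eigen_or_anticomm_stab_states)
  then consider (eigen) l where "pauli n Q \<phi> = scale l \<phi>"
    | (anti) g where "pauli n g \<phi> = \<phi>" "pauli n Q (pauli n g \<phi>) = scale (-1) (pauli n g (pauli n Q \<phi>))"
    unfolding eigen_or_anticomm_def by blast
  then show ?thesis
  proof cases
    case (eigen l)
    then show ?thesis by (rule last_qubit_form_eigen[OF \<phi>])
  next
    case (anti g)
    define \<psi> where "\<psi> = (\<lambda>y. \<phi> y + pauli n Q \<phi> y)"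
    have "\<psi> \<in> scaled_stab n" unfolding \<psi>_def using \<phi> by (rule stab_plus_pauli_scaled_stab)
    then obtain c \<phi>' where \<phi>': "\<phi>' \<in> stab_states n" "\<psi> = scale c \<phi>'" by (rule scaled_stabE)
    have anti': "pauli n Q \<phi> = scale (-1) (pauli n g (pauli n Q \<phi>))" using anti by simp
    then have "pauli n g (pauli n Q \<phi>) = scale (-1) (pauli n Q \<phi>)" by (simp add: scale_def fun_eq_iff)
    then have "pauli n g \<psi> = (\<lambda>y. \<phi> y - pauli n Q \<phi> y)"
      unfolding \<psi>_def pauli_add using anti(1) by (simp add: scale_def)
    then have "join_last n \<psi> (\<lambda>y. \<phi> y - pauli n Q \<phi> y) = scale c (join_last n \<phi>' (pauli n g \<phi>'))"
      using \<phi>'(2) by (simp add: pauli_scale join_last_scale[symmetric])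
    then show ?thesis using last_qubit_formI(3)[OF \<phi>'(1)] unfolding \<psi>_def by metis
  qed
qed

lemma last_qubit_form_hgate_last:
  assumes "last_qubit_form n \<Phi>"
  shows "last_qubit_form n (hgate n \<Phi>)"
  using assms
proof (cases rule: last_qubit_formE)
  case (zero \<phi> s)
  have "hgate n \<Phi> = scale (s / complex_of_real (sqrt 2)) (join_last n \<phi> (pauli n (0, \<lambda>_. False, \<lambda>_. False) \<phi>))"
    using zero by (simp add: hgate_scale hgate_join_last scale_scale pauli_identity stab_states_qstate_on scale_one)
  then show ?thesis using last_qubit_formI(3)[OF zero(1)] by simp
next
  case (one \<phi> s)
  have "join_last n (\<lambda>y. 0 + \<phi> y) (\<lambda>y. 0 - \<phi> y) = join_last n \<phi> (pauli n (2, \<lambda>_. False, \<lambda>_. False) \<phi>)"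
    using one(1) by (intro join_last_eqI) (simp_all add: pauli_identity stab_states_qstate_on scale_def)
  then have "hgate n \<Phi> = scale (s / complex_of_real (sqrt 2)) (join_last n \<phi> (pauli n (2, \<lambda>_. False, \<lambda>_. False) \<phi>))"
    using one(2) by (simp add: hgate_scale hgate_join_last scale_scale)
  then show ?thesis using last_qubit_formI(3)[OF one(1)] by simp
next
  case (pauli \<phi> s Q)
  then have "hgate n \<Phi> = scale (s / complex_of_real (sqrt 2))
      (join_last n (\<lambda>y. \<phi> y + pauli n Q \<phi> y) (\<lambda>y. \<phi> y - pauli n Q \<phi> y))"
    by (simp add: hgate_scale hgate_join_last scale_scale)
  then show ?thesis using last_qubit_form_scale[OF last_qubit_form_hadamard_mix[OF pauli(1)]] by simp
qed

lemma cnot_eq_hadamard_czgate: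
  assumes "qstate_on (Suc n) \<Psi>" "a < n"
  shows "cnot a n \<Psi> = hgate n (czgate a n (hgate n \<Psi>))"
proof
  fix y
  show "cnot a n \<Psi> y = hgate n (czgate a n (hgate n \<Psi>)) y"
  proof (cases "length y = Suc n")
    case True
    then have nl: "n < length y" and al: "a < length y" using assms by auto
    define A where "A = \<Psi> (y[n := False])"
    define B where "B = \<Psi> (y[n := True])"
    have "hgate n (czgate a n (hgate n \<Psi>)) y =
      ((A + B) / complex_of_real (sqrt 2) + (sign_of (y ! n) * sign_of (y ! a)) * ((A - B) / complex_of_real (sqrt 2))) / complex_of_real (sqrt 2)"
      unfolding hgate_def czgate_def A_def B_def using nl al assms(2)
      by (cases "y ! n"; cases "y ! a") (simp_all add: nth_list_update algebra_simps)
    also have "\<dots> = ((A + B) + (sign_of (y ! n) * sign_of (y ! a)) * (A - B)) / 2"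
      by (rule divide_sqrt2_twice)
    finally show ?thesis
      using list_update_id[of y n] by (cases "y ! n"; cases "y ! a") (simp_all add: cnot_def A_def B_def)
  next
    case False
    have "qstate_on (Suc n) (hgate n (czgate a n (hgate n \<Psi>)))"
      using assms(1) by (intro qstate_on_hgate) (simp add: qstate_on_def czgate_def hgate_def)
    then show ?thesis using False assms(1) by (simp add: qstate_onD cnot_def)
  qed
qed

lemma stab_states_last_qubit_form: "\<Phi> \<in> stab_states (Suc n) \<Longrightarrow> last_qubit_form n \<Phi>"
proof (induction rule: stab_states.induct)
  case init
  show ?case using last_qubit_formI(1)[OF stab_states.init, of n 1] by (simp add: ket0_Suc scale_one)
next
  case (H \<psi> j)
  then show ?case
    by (cases "j < n") (auto simp: last_qubit_form_hgate_low last_qubit_form_hgate_last less_Suc_eq)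
next
  case (S \<psi> j)
  then show ?case
    by (cases "j < n") (auto simp: last_qubit_form_sgate_low last_qubit_form_sgate_last less_Suc_eq)
next
  case (CNOT \<psi> a b)
  then consider "a < n" "b < n" | "a = n" "b < n" | "b = n" "a < n" by linarith
  then show ?case
  proof cases
    case 3
    then have "cnot a b \<psi> = hgate n (czgate a n (hgate n \<psi>))"
      using cnot_eq_hadamard_czgate[OF stab_states_qstate_on[OF CNOT.hyps(1)]] by simp
    then show ?thesis using CNOT.IH 3 by (simp add: last_qubit_form_hgate_last last_qubit_form_czgate_last)
  qed (use CNOT in \<open>simp_all add: last_qubit_form_cnot_low last_qubit_form_cnot_last\<close>)
qed

lemma stab_fix_last_qubit_False:
  assumes "\<Phi> \<in> stab_states (Suc n)"
  shows "(\<lambda>z. \<Phi> (z @ [False])) \<in> scaled_stab n"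
  using stab_states_last_qubit_form[OF assms]
proof (cases rule: last_qubit_formE)
  case (zero \<phi> s)
  then have "(\<lambda>z. \<Phi> (z @ [False])) = scale s \<phi>"
    using stab_states_qstate_on[OF zero(1)] by (auto simp: scale_def qstate_onD)
  then show ?thesis using scaled_stabI[OF zero(1)] by simp
next
  case (one \<phi> s)
  then have "(\<lambda>z. \<Phi> (z @ [False])) = (\<lambda>_. 0)" by (simp add: scale_def fun_eq_iff)
  then show ?thesis by (simp add: zero_in_scaled_stab)
next
  case (pauli \<phi> s Q)
  then have "(\<lambda>z. \<Phi> (z @ [False])) = scale s \<phi>"
    using stab_states_qstate_on[OF pauli(1)] by (auto simp: scale_def qstate_onD)
  then show ?thesis using scaled_stabI[OF pauli(1)] by simp
qed

lemma stab_fix_last_qubit: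
  assumes "\<Phi> \<in> stab_states (Suc n)"
  shows "(\<lambda>z. \<Phi> (z @ [b])) \<in> scaled_stab n"
proof (cases b)
  case True
  have "xgate n \<Phi> \<in> stab_states (Suc n)" using assms by (rule stab_states_xgate) simp
  then have "(\<lambda>z. xgate n \<Phi> (z @ [False])) \<in> scaled_stab n" by (rule stab_fix_last_qubit_False)
  moreover have "xgate n \<Phi> (z @ [False]) = \<Phi> (z @ [True])" for z
    using stab_states_qstate_on[OF assms] list_update_snoc_last[of z False True]
    by (cases "length z = n") (simp_all add: xgate_def nth_append qstate_onD)
  ultimately show ?thesis using True by simp
qed (use stab_fix_last_qubit_False[OF assms] in simp)

section \<open>Affine substitution\<close>

lemma xor_vec_length[simp]: "length (xor_vec x y) = min (length x) (length y)"
  by (simp add: xor_vec_def)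

lemma xor_vec_nth[simp]: "i < length x \<Longrightarrow> i < length y \<Longrightarrow> xor_vec x y ! i = (x ! i \<noteq> y ! i)"
  by (simp add: xor_vec_def)

definition affine_fun :: "nat \<Rightarrow> (bool list \<Rightarrow> bool) \<Rightarrow> bool" where
  "affine_fun n g \<longleftrightarrow> (\<forall>y y'. length y = n \<longrightarrow> length y' = n \<longrightarrow>
      g (xor_vec y y') = ((g y \<noteq> g y') \<noteq> g (replicate n False)))"

definition affine_map :: "nat \<Rightarrow> nat \<Rightarrow> (bool list \<Rightarrow> bool list) \<Rightarrow> bool" where
  "affine_map n K h \<longleftrightarrow> (\<forall>y. length y = n \<longrightarrow> length (h y) = K) \<and> (\<forall>i<K. affine_fun n (\<lambda>y. h y ! i))"

definition parity :: "nat set \<Rightarrow> bool list \<Rightarrow> bool" where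
  "parity S y = odd (card {j\<in>S. y ! j})"

definition indicator_list :: "nat \<Rightarrow> nat set \<Rightarrow> bool list" where
  "indicator_list n T = map (\<lambda>j. j \<in> T) [0..<n]"

definition substitute :: "nat \<Rightarrow> (bool list \<Rightarrow> bool list) \<Rightarrow> qstate \<Rightarrow> qstate" where
  "substitute n h \<Psi> = (\<lambda>y. if length y = n then \<Psi> (y @ h y) else 0)"

lemma affine_fun_cong: "affine_fun n g \<Longrightarrow> (\<And>y. length y = n \<Longrightarrow> g y = g' y) \<Longrightarrow> affine_fun n g'"
  unfolding affine_fun_def by (metis length_replicate min.idem xor_vec_length)

lemma affine_fun_nth: "j < n \<Longrightarrow> affine_fun n (\<lambda>y. y ! j)"
  unfolding affine_fun_def by auto

lemma affine_fun_Not: "affine_fun n g \<Longrightarrow> affine_fun n (\<lambda>y. \<not> g y)"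
  unfolding affine_fun_def by auto

lemma affine_fun_parity:
  assumes "affine_fun n g" "length y = n"
  shows "g y = (g (replicate n False) \<noteq> parity {j. j < n \<and> g (indicator_list n {j}) \<noteq> g (replicate n False)} y)"
proof -
  define g0 where "g0 = g (replicate n False)"
  define S where "S = {j. j < n \<and> g (indicator_list n {j}) \<noteq> g0}"
  have ind: "g (indicator_list n T) = (g0 \<noteq> odd (card (T \<inter> S)))" if "finite T" "T \<subseteq> {..<n}" for T
    using that
  proof (induction T rule: finite_induct)
    case empty
    then show ?case by (simp add: indicator_list_def map_replicate_const g0_def)
  next
    case (insert j T)
    have "indicator_list n (insert j T) = xor_vec (indicator_list n T) (indicator_list n {j})"
      using insert.hyps(2) by (intro nth_equalityI) (auto simp: indicator_list_def)
    then have "g (indicator_list n (insert j T)) = ((g (indicator_list n T) \<noteq> g (indicator_list n {j})) \<noteq> g0)"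
      using assms(1) unfolding affine_fun_def g0_def by (simp add: indicator_list_def)
    moreover have "insert j T \<inter> S = (if j \<in> S then insert j (T \<inter> S) else T \<inter> S)" by auto
    ultimately show ?case
      using insert unfolding S_def by (auto simp: card_insert_if)
  qed
  have "y = indicator_list n {j. j < n \<and> y ! j}"
    using assms(2) by (intro nth_equalityI) (auto simp: indicator_list_def)
  then have "g y = (g0 \<noteq> odd (card ({j. j < n \<and> y ! j} \<inter> S)))" using ind[of "{j. j < n \<and> y ! j}"] by auto
  moreover have "{j. j < n \<and> y ! j} \<inter> S = {j\<in>S. y ! j}" unfolding S_def by auto
  ultimately show ?thesis unfolding parity_def S_def g0_def by simp
qed

lemma parity_append: "S \<subseteq> {..<length y} \<Longrightarrow> parity S (y @ w) = parity S y"
  unfolding parity_def by (intro arg_cong[where f="\<lambda>A. odd (card A)"]) (auto simp: nth_append)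

lemma parity_insert: "s \<notin> S \<Longrightarrow> finite S \<Longrightarrow> parity (insert s S) y = (y ! s \<noteq> parity S y)"
proof -
  assume "s \<notin> S" "finite S"
  moreover have "{j \<in> insert s S. y ! j} = (if y ! s then insert s {j \<in> S. y ! j} else {j \<in> S. y ! j})"
    by auto
  ultimately show ?thesis by (simp add: parity_def)
qed

definition cnot_fan_in :: "nat \<Rightarrow> nat list \<Rightarrow> qstate \<Rightarrow> qstate" where
  "cnot_fan_in t ss \<psi> = foldr (\<lambda>s. cnot s t) ss \<psi>"

lemma cnot_fan_in_apply:
  assumes "distinct ss" "t \<notin> set ss" "t < length y"
  shows "cnot_fan_in t ss \<psi> y = \<psi> (y[t := (y ! t \<noteq> parity (set ss) y)])"
  using assms
proof (induction ss arbitrary: y)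
  case Nil
  then show ?case by (simp add: cnot_fan_in_def parity_def)
next
  case (Cons s ss)
  define y' where "y' = y[t := (y ! t \<noteq> y ! s)]"
  have "parity (set ss) y' = parity (set ss) y"
    unfolding parity_def y'_def using Cons.prems
    by (intro arg_cong[where f="\<lambda>A. odd (card A)"]) (auto simp: nth_list_update)
  moreover have "cnot_fan_in t (s # ss) \<psi> y = \<psi> (y'[t := (y' ! t \<noteq> parity (set ss) y')])"
    using Cons by (simp add: cnot_fan_in_def cnot_def y'_def)
  moreover have "y'[t := (y' ! t \<noteq> parity (set ss) y)] = y[t := (y ! t \<noteq> parity (set (s # ss)) y)]"
    using Cons.prems by (auto simp: y'_def parity_insert list_eq_iff_nth_eq nth_list_update)
  ultimately show ?case by simp
qed

lemma stab_states_cnot_fan_in: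
  "\<psi> \<in> stab_states n \<Longrightarrow> t < n \<Longrightarrow> \<forall>s\<in>set ss. s < n \<and> s \<noteq> t \<Longrightarrow> cnot_fan_in t ss \<psi> \<in> stab_states n"
  by (induction ss) (auto simp: cnot_fan_in_def intro: stab_states.CNOT)

text \<open>Fixing the last qubit to an affine function of the others: a fan-in of CNOTs computes the
  parity into the last qubit, which is then fixed to a constant.\<close>

lemma stab_fix_last_qubit_parity:
  assumes "\<Psi> \<in> stab_states (Suc N)" "S \<subseteq> {..<N}"
  shows "(\<lambda>w. \<Psi> (w @ [b \<noteq> parity S w])) \<in> scaled_stab N"
proof -
  define ss where "ss = sorted_list_of_set S"
  have "finite S" using assms(2) finite_subset by blast
  then have ss: "set ss = S" "distinct ss" unfolding ss_def by auto
  have fan: "cnot_fan_in N ss \<Psi> \<in> stab_states (Suc N)"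
    using assms ss by (intro stab_states_cnot_fan_in) auto
  then have "(\<lambda>w. cnot_fan_in N ss \<Psi> (w @ [b])) \<in> scaled_stab N"
    by (rule stab_fix_last_qubit)
  moreover have "cnot_fan_in N ss \<Psi> (w @ [b]) = \<Psi> (w @ [b \<noteq> parity S w])" for w
  proof (cases "length w = N")
    case True
    have "cnot_fan_in N ss \<Psi> (w @ [b]) = \<Psi> ((w @ [b])[N := ((w @ [b]) ! N \<noteq> parity (set ss) (w @ [b]))])"
      by (rule cnot_fan_in_apply) (use ss assms(2) True in auto)
    then show ?thesis using ss assms(2) True
      by (simp add: nth_append parity_append list_update_snoc_last[of w b, simplified True])
  next
    case False
    then show ?thesis using stab_states_qstate_on[OF assms(1)] stab_states_qstate_on[OF fan]
      by (simp add: qstate_onD)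
  qed
  ultimately show ?thesis by simp
qed

lemma affine_map_SucD:
  assumes "affine_map n (Suc K) h"
  shows "affine_map n K (\<lambda>y. butlast (h y))" "affine_fun n (\<lambda>y. h y ! K)"
    and "\<And>y. length y = n \<Longrightarrow> h y = butlast (h y) @ [h y ! K]"
proof -
  have len: "length (h y) = Suc K" if "length y = n" for y using assms that unfolding affine_map_def by simp
  show "affine_map n K (\<lambda>y. butlast (h y))"
    unfolding affine_map_def
  proof (intro conjI allI impI)
    show "length (butlast (h y)) = K" if "length y = n" for y using len[OF that] by simp
    fix i assume "i < K"
    then have "affine_fun n (\<lambda>y. h y ! i)" using assms unfolding affine_map_def by simp
    then show "affine_fun n (\<lambda>y. butlast (h y) ! i)"
      by (rule affine_fun_cong) (simp add: nth_butlast len \<open>i < K\<close>)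
  qed
  show "affine_fun n (\<lambda>y. h y ! K)" using assms unfolding affine_map_def by simp
  show "h y = butlast (h y) @ [h y ! K]" if "length y = n" for y
    using len[OF that] by (metis append_butlast_last_id diff_Suc_1 last_conv_nth length_0_conv nat.distinct(1))
qed

lemma stab_substitute_affine:
  "\<Psi> \<in> stab_states (n + K) \<Longrightarrow> affine_map n K h \<Longrightarrow> substitute n h \<Psi> \<in> scaled_stab n"
proof (induction K arbitrary: \<Psi> h)
  case 0
  then have "substitute n h \<Psi> = \<Psi>"
    using stab_states_qstate_on[OF "0.prems"(1)] by (auto simp: substitute_def affine_map_def qstate_onD)
  then show ?case using "0.prems"(1) by (simp add: stab_in_scaled_stab)
next
  case (Suc K)
  note h = affine_map_SucD[OF Suc.prems(2)]
  define g0 where "g0 = h (replicate n False) ! K"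
  define S where "S = {j. j < n \<and> h (indicator_list n {j}) ! K \<noteq> g0}"
  have "(\<lambda>w. \<Psi> (w @ [g0 \<noteq> parity S w])) \<in> scaled_stab (n + K)"
    using Suc.prems(1) by (intro stab_fix_last_qubit_parity) (auto simp: S_def)
  then obtain c \<Phi> where \<Phi>: "\<Phi> \<in> stab_states (n + K)" "(\<lambda>w. \<Psi> (w @ [g0 \<noteq> parity S w])) = scale c \<Phi>"
    by (rule scaled_stabE)
  have "substitute n h \<Psi> = scale c (substitute n (\<lambda>y. butlast (h y)) \<Phi>)"
  proof
    fix y
    show "substitute n h \<Psi> y = scale c (substitute n (\<lambda>y. butlast (h y)) \<Phi>) y"
    proof (cases "length y = n")
      case True
      have hK: "h y ! K = (g0 \<noteq> parity S (y @ butlast (h y)))"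
        using affine_fun_parity[OF h(2) True] True by (simp add: parity_append S_def g0_def subset_iff)
      have "y @ h y = y @ (butlast (h y) @ [h y ! K])" using h(3)[OF True] by (rule arg_cong)
      also have "\<dots> = (y @ butlast (h y)) @ [g0 \<noteq> parity S (y @ butlast (h y))]" using hK by simp
      finally have "\<Psi> (y @ h y) = \<Psi> ((y @ butlast (h y)) @ [g0 \<noteq> parity S (y @ butlast (h y))])"
        by simp
      then show ?thesis using True fun_cong[OF \<Phi>(2), of "y @ butlast (h y)"]
        by (simp add: substitute_def scale_def)
    qed (simp add: substitute_def scale_def)
  qed
  then show ?case using Suc.IH[OF \<Phi>(1) h(1)] by (simp add: scaled_stab_scale)
qed

section \<open>Tensor products and stabilizer rank\<close>

definition tensor :: "nat \<Rightarrow> nat \<Rightarrow> qstate \<Rightarrow> qstate \<Rightarrow> qstate" where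
  "tensor n1 n2 \<psi> \<phi> = (\<lambda>y. if length y = n1 + n2 then \<psi> (take n1 y) * \<phi> (drop n1 y) else 0)"

lemma tensor_app: "length y = n1 \<Longrightarrow> length w = n2 \<Longrightarrow> tensor n1 n2 \<psi> \<phi> (y @ w) = \<psi> y * \<phi> w"
  by (simp add: tensor_def)

lemma tensor_ket0: "tensor n1 n2 (ket0 n1) (ket0 n2) = ket0 (n1 + n2)"
proof
  fix y
  show "tensor n1 n2 (ket0 n1) (ket0 n2) y = ket0 (n1 + n2) y"
  proof (cases "length y = n1 + n2")
    case True
    have sp: "(\<forall>i<n1+n2. P i) \<longleftrightarrow> (\<forall>i<n1. P i) \<and> (\<forall>i<n2. P (n1 + i))" for P
      by (auto, metis add_diff_inverse_nat add_less_cancel_left)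
    have "y = replicate (n1 + n2) False \<longleftrightarrow> (\<forall>i<n1+n2. \<not> y ! i)"
      using True by (auto simp: list_eq_iff_nth_eq)
    moreover have "take n1 y = replicate n1 False \<longleftrightarrow> (\<forall>i<n1. \<not> y ! i)"
      using True by (auto simp: list_eq_iff_nth_eq)
    moreover have "drop n1 y = replicate n2 False \<longleftrightarrow> (\<forall>i<n2. \<not> y ! (n1 + i))"
      using True by (auto simp: list_eq_iff_nth_eq)
    ultimately have "y = replicate (n1 + n2) False \<longleftrightarrow> take n1 y = replicate n1 False \<and> drop n1 y = replicate n2 False"
      using sp by simp
    then show ?thesis using True by (auto simp: tensor_def ket0_def)
  next
    case False then show ?thesis by (auto simp: tensor_def ket0_def)
  qed
qed

lemma tensor_hgate_r: "qstate_on n2 \<phi> \<Longrightarrow> j < n2 \<Longrightarrow> tensor n1 n2 \<psi> (hgate j \<phi>) = hgate (n1 + j) (tensor n1 n2 \<psi> \<phi>)"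
proof
  fix y assume v: "qstate_on n2 \<phi>" and j: "j < n2"
  show "tensor n1 n2 \<psi> (hgate j \<phi>) y = hgate (n1 + j) (tensor n1 n2 \<psi> \<phi>) y"
  proof (cases "length y = n1 + n2")
    case True
    then show ?thesis using j by (simp add: tensor_def hgate_def drop_update_swap algebra_simps)
  next
    case False then show ?thesis by (simp add: tensor_def hgate_def)
  qed
qed

lemma tensor_sgate_r: "j < n2 \<Longrightarrow> tensor n1 n2 \<psi> (sgate j \<phi>) = sgate (n1 + j) (tensor n1 n2 \<psi> \<phi>)"
proof
  fix y assume j: "j < n2"
  show "tensor n1 n2 \<psi> (sgate j \<phi>) y = sgate (n1 + j) (tensor n1 n2 \<psi> \<phi>) y"
  proof (cases "length y = n1 + n2")
    case True
    then show ?thesis using j by (simp add: tensor_def sgate_def algebra_simps)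
  next
    case False then show ?thesis by (simp add: tensor_def sgate_def)
  qed
qed

lemma tensor_cnot_r: "a < n2 \<Longrightarrow> b < n2 \<Longrightarrow> tensor n1 n2 \<psi> (cnot a b \<phi>) = cnot (n1 + a) (n1 + b) (tensor n1 n2 \<psi> \<phi>)"
proof
  fix y assume ab: "a < n2" "b < n2"
  show "tensor n1 n2 \<psi> (cnot a b \<phi>) y = cnot (n1 + a) (n1 + b) (tensor n1 n2 \<psi> \<phi>) y"
  proof (cases "length y = n1 + n2")
    case True
    then show ?thesis using ab by (simp add: tensor_def cnot_def drop_update_swap)
  next
    case False then show ?thesis by (simp add: tensor_def cnot_def)
  qed
qed

lemma tensor_hgate_l: "j < n1 \<Longrightarrow> tensor n1 n2 (hgate j \<psi>) \<phi> = hgate j (tensor n1 n2 \<psi> \<phi>)"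
proof
  fix y assume j: "j < n1"
  show "tensor n1 n2 (hgate j \<psi>) \<phi> y = hgate j (tensor n1 n2 \<psi> \<phi>) y"
  proof (cases "length y = n1 + n2")
    case True
    then show ?thesis using j by (simp add: tensor_def hgate_def take_update_swap algebra_simps add_divide_distrib)
  next
    case False then show ?thesis by (simp add: tensor_def hgate_def)
  qed
qed

lemma tensor_sgate_l: "j < n1 \<Longrightarrow> tensor n1 n2 (sgate j \<psi>) \<phi> = sgate j (tensor n1 n2 \<psi> \<phi>)"
proof
  fix y assume j: "j < n1"
  show "tensor n1 n2 (sgate j \<psi>) \<phi> y = sgate j (tensor n1 n2 \<psi> \<phi>) y"
  proof (cases "length y = n1 + n2")
    case True
    then show ?thesis using j by (simp add: tensor_def sgate_def algebra_simps)
  next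
    case False then show ?thesis by (simp add: tensor_def sgate_def)
  qed
qed

lemma tensor_cnot_l: "a < n1 \<Longrightarrow> b < n1 \<Longrightarrow> tensor n1 n2 (cnot a b \<psi>) \<phi> = cnot a b (tensor n1 n2 \<psi> \<phi>)"
proof
  fix y assume ab: "a < n1" "b < n1"
  show "tensor n1 n2 (cnot a b \<psi>) \<phi> y = cnot a b (tensor n1 n2 \<psi> \<phi>) y"
  proof (cases "length y = n1 + n2")
    case True
    then show ?thesis using ab by (simp add: tensor_def cnot_def take_update_swap)
  next
    case False then show ?thesis by (simp add: tensor_def cnot_def)
  qed
qed

lemma stab_tensor_ket0: "\<phi> \<in> stab_states n2 \<Longrightarrow> tensor n1 n2 (ket0 n1) \<phi> \<in> stab_states (n1 + n2)"
proof (induction rule: stab_states.induct)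
  case init
  then show ?case by (simp add: tensor_ket0 stab_states.init)
next
  case (H \<psi> j)
  then show ?case by (simp add: tensor_hgate_r stab_states_qstate_on stab_states.H)
next
  case (S \<psi> j)
  then show ?case by (simp add: tensor_sgate_r stab_states.S)
next
  case (CNOT \<psi> a b)
  then show ?case by (simp add: tensor_cnot_r stab_states.CNOT)
qed

lemma stab_tensor: "\<psi> \<in> stab_states n1 \<Longrightarrow> \<phi> \<in> stab_states n2 \<Longrightarrow> tensor n1 n2 \<psi> \<phi> \<in> stab_states (n1 + n2)"
proof (induction rule: stab_states.induct)
  case init
  then show ?case by (rule stab_tensor_ket0)
next
  case (H \<psi> j)
  then show ?case by (simp add: tensor_hgate_l stab_states.H)
next
  case (S \<psi> j)
  then show ?case by (simp add: tensor_sgate_l stab_states.S)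
next
  case (CNOT \<psi> a b)
  then show ?case by (simp add: tensor_cnot_l stab_states.CNOT)
qed

lemma ket_indicator_list_stab: "finite T \<Longrightarrow> T \<subseteq> {..<n} \<Longrightarrow> ket (indicator_list n T) \<in> stab_states n"
proof (induction T rule: finite_induct)
  case empty
  have "indicator_list n {} = replicate n False" by (simp add: indicator_list_def map_replicate_const)
  then show ?case by (simp add: ket0_eq_ket[symmetric] stab_states.init)
next
  case (insert j T)
  have jn: "j < n" using insert.prems by auto
  have "ket (indicator_list n (insert j T)) = xgate j (ket (indicator_list n T))"
  proof
    fix y
    show "ket (indicator_list n (insert j T)) y = xgate j (ket (indicator_list n T)) y"
    proof (cases "length y = n")
      case True
      have "(y = indicator_list n (insert j T)) \<longleftrightarrow> (y[j := (\<not> y ! j)] = indicator_list n T)"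
        using True jn insert.hyps(2)
        by (auto simp: list_eq_iff_nth_eq indicator_list_def nth_list_update)
      then show ?thesis by (simp add: ket_def xgate_def)
    next
      case False
      have l1: "length (y[j := (\<not> y ! j)]) \<noteq> n" using False by simp
      have l2: "length (indicator_list n T) = n" "length (indicator_list n (insert j T)) = n" by (simp_all add: indicator_list_def)
      have "y[j := (\<not> y ! j)] \<noteq> indicator_list n T" using l1 l2(1) by metis
      moreover have "y \<noteq> indicator_list n (insert j T)" using False l2(2) by metis
      ultimately have "y[j := (\<not> y ! j)] \<noteq> indicator_list n T" "y \<noteq> indicator_list n (insert j T)" by auto
      then show ?thesis by (simp add: ket_def xgate_def)
    qed
  qed
  then show ?case using insert jn by (simp add: stab_states_xgate)
qed

lemma ket_stab: "length w = n \<Longrightarrow> ket w \<in> stab_states n"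
proof -
  assume w: "length w = n"
  have "w = indicator_list n {j. j < n \<and> w ! j}" using w by (intro nth_equalityI) (auto simp: indicator_list_def)
  then show ?thesis using ket_indicator_list_stab[of "{j. j < n \<and> w ! j}" n] by auto
qed

definition stab_decomp :: "nat \<Rightarrow> qstate \<Rightarrow> nat \<Rightarrow> bool" where
  "stab_decomp n \<psi> k \<longleftrightarrow> (\<exists>c \<Phi>. (\<forall>i<k. \<Phi> i \<in> stab_states n) \<and> \<psi> = (\<lambda>x. \<Sum>i<k. c i * \<Phi> i x))"

lemma stab_rank_eq_Least: "stab_rank n \<psi> = (LEAST k. stab_decomp n \<psi> k)"
  by (simp add: stab_rank_def stab_decomp_def)

lemma stab_rank_le: "stab_decomp n \<psi> k \<Longrightarrow> stab_rank n \<psi> \<le> k"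
  unfolding stab_rank_eq_Least by (rule Least_le)

lemma stab_decomp_sum:
  assumes "finite I" "\<And>i. i \<in> I \<Longrightarrow> \<Phi> i \<in> stab_states n" "\<psi> = (\<lambda>x. \<Sum>i\<in>I. c i * \<Phi> i x)"
  shows "stab_decomp n \<psi> (card I)"
proof -
  obtain h where h: "bij_betw h {0..<card I} I" using ex_bij_betw_nat_finite[OF assms(1)] by blast
  have "\<psi> = (\<lambda>x. \<Sum>p<card I. c (h p) * \<Phi> (h p) x)"
  proof
    fix x
    have "(\<Sum>i\<in>I. c i * \<Phi> i x) = (\<Sum>p\<in>{0..<card I}. c (h p) * \<Phi> (h p) x)"
      using sum.reindex_bij_betw[OF h, of "\<lambda>i. c i * \<Phi> i x"] by simp
    then show "\<psi> x = (\<Sum>p<card I. c (h p) * \<Phi> (h p) x)" using assms(3) by (simp add: atLeast0LessThan)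
  qed
  moreover have "\<forall>p<card I. \<Phi> (h p) \<in> stab_states n"
    using h assms(2) bij_betwE by fastforce
  ultimately show ?thesis unfolding stab_decomp_def
    by (intro exI[of _ "c \<circ> h"] exI[of _ "\<Phi> \<circ> h"]) auto
qed

lemma stab_rank_sum_le:
  assumes "finite I" "\<And>i. i \<in> I \<Longrightarrow> \<Phi> i \<in> stab_states n" "\<psi> = (\<lambda>x. \<Sum>i\<in>I. c i * \<Phi> i x)"
  shows "stab_rank n \<psi> \<le> card I"
  by (rule stab_rank_le, rule stab_decomp_sum[OF assms])

lemma stab_rank_sum_scaled_le:
  assumes "finite I" "\<And>i. i \<in> I \<Longrightarrow> F i \<in> scaled_stab n" "\<psi> = (\<lambda>x. \<Sum>i\<in>I. F i x)"
  shows "stab_rank n \<psi> \<le> card I"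
proof -
  have "\<forall>i\<in>I. \<exists>p. snd p \<in> stab_states n \<and> F i = scale (fst p) (snd p)"
  proof
    fix i assume "i \<in> I"
    then obtain c \<Phi> where "\<Phi> \<in> stab_states n" "F i = scale c \<Phi>" by (rule scaled_stabE[OF assms(2)])
    then show "\<exists>p. snd p \<in> stab_states n \<and> F i = scale (fst p) (snd p)" by (intro exI[of _ "(c, \<Phi>)"]) simp
  qed
  from bchoice[OF this] obtain f where f: "\<forall>i\<in>I. snd (f i) \<in> stab_states n \<and> F i = scale (fst (f i)) (snd (f i))" ..
  define c where "c = (\<lambda>i. fst (f i))"
  define \<Phi> where "\<Phi> = (\<lambda>i. snd (f i))"
  have cP: "\<And>i. i \<in> I \<Longrightarrow> \<Phi> i \<in> stab_states n \<and> F i = scale (c i) (\<Phi> i)"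
    using f unfolding c_def \<Phi>_def by blast
  have "\<psi> = (\<lambda>x. \<Sum>i\<in>I. c i * \<Phi> i x)"
    using assms(3) cP by (auto simp: scale_def intro!: sum.cong)
  then show ?thesis using assms(1) cP by (intro stab_rank_sum_le) auto
qed

lemma stab_decomp_exists: assumes "qstate_on n \<psi>" shows "\<exists>k. stab_decomp n \<psi> k"
proof -
  define W where "W = {w :: bool list. length w = n}"
  have fW: "finite W" unfolding W_def using finite_lists_length_eq[of "UNIV :: bool set" n] by simp
  have eq: "\<psi> = (\<lambda>x. \<Sum>w\<in>W. \<psi> w * ket w x)"
  proof
    fix x
    show "\<psi> x = (\<Sum>w\<in>W. \<psi> w * ket w x)"
    proof (cases "x \<in> W")
      case True
      have "(\<Sum>w\<in>W. \<psi> w * ket w x) = (\<Sum>w\<in>W. if w = x then \<psi> x else 0)"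
        by (intro sum.cong) (auto simp: ket_def)
      then show ?thesis using True fW by simp
    next
      case False
      then have "\<psi> x = 0" using assms unfolding W_def by (simp add: qstate_onD)
      moreover have "(\<Sum>w\<in>W. \<psi> w * ket w x) = 0"
        using False by (intro sum.neutral) (auto simp: ket_def)
      ultimately show ?thesis by simp
    qed
  qed
  have "stab_decomp n \<psi> (card W)"
    by (rule stab_decomp_sum[OF fW _ eq]) (simp add: W_def ket_stab)
  then show ?thesis by (rule exI)
qed

lemma stab_decomp_stab_rank: "qstate_on n \<psi> \<Longrightarrow> stab_decomp n \<psi> (stab_rank n \<psi>)"
  unfolding stab_rank_eq_Least by (rule LeastI_ex, rule stab_decomp_exists)

lemma stab_decomp_scale: assumes "stab_decomp n \<psi> k" shows "stab_decomp n (scale a \<psi>) k"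
proof -
  obtain c \<Phi> where d: "\<forall>i<k. \<Phi> i \<in> stab_states n" "\<psi> = (\<lambda>x. \<Sum>i<k. c i * \<Phi> i x)"
    using assms unfolding stab_decomp_def by blast
  have "scale a \<psi> = (\<lambda>x. \<Sum>i<k. (a * c i) * \<Phi> i x)"
    unfolding d(2) by (auto simp: scale_def sum_distrib_left algebra_simps)
  then show ?thesis using d(1) unfolding stab_decomp_def
    by (intro exI[of _ "\<lambda>i. a * c i"] exI[of _ \<Phi>]) auto
qed

lemma stab_rank_scale_le: assumes "qstate_on n \<psi>" shows "stab_rank n (scale a \<psi>) \<le> stab_rank n \<psi>"
  by (rule stab_rank_le, rule stab_decomp_scale, rule stab_decomp_stab_rank[OF assms])

lemma stab_decomp_tensor:
  assumes "stab_decomp n1 \<psi> k1" "stab_decomp n2 \<phi> k2"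
  shows "stab_decomp (n1 + n2) (tensor n1 n2 \<psi> \<phi>) (k1 * k2)"
proof -
  obtain c \<Phi> where d1: "\<forall>i<k1. \<Phi> i \<in> stab_states n1" "\<psi> = (\<lambda>x. \<Sum>i<k1. c i * \<Phi> i x)"
    using assms(1) unfolding stab_decomp_def by blast
  obtain d \<Theta> where d2: "\<forall>i<k2. \<Theta> i \<in> stab_states n2" "\<phi> = (\<lambda>x. \<Sum>i<k2. d i * \<Theta> i x)"
    using assms(2) unfolding stab_decomp_def by blast
  define I where "I = {..<k1} \<times> {..<k2}"
  have "tensor n1 n2 \<psi> \<phi> = (\<lambda>x. \<Sum>p\<in>I. (c (fst p) * d (snd p)) * tensor n1 n2 (\<Phi> (fst p)) (\<Theta> (snd p)) x)"
  proof
    fix x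
    show "tensor n1 n2 \<psi> \<phi> x = (\<Sum>p\<in>I. (c (fst p) * d (snd p)) * tensor n1 n2 (\<Phi> (fst p)) (\<Theta> (snd p)) x)"
    proof (cases "length x = n1 + n2")
      case True
      have "tensor n1 n2 \<psi> \<phi> x = (\<Sum>i<k1. c i * \<Phi> i (take n1 x)) * (\<Sum>j<k2. d j * \<Theta> j (drop n1 x))"
        using True unfolding d1(2) d2(2) by (simp add: tensor_def)
      also have "\<dots> = (\<Sum>i<k1. \<Sum>j<k2. (c i * \<Phi> i (take n1 x)) * (d j * \<Theta> j (drop n1 x)))"
        by (simp add: sum_product)
      also have "\<dots> = (\<Sum>p\<in>I. (c (fst p) * \<Phi> (fst p) (take n1 x)) * (d (snd p) * \<Theta> (snd p) (drop n1 x)))"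
        unfolding I_def by (simp add: sum.cartesian_product split_beta)
      also have "\<dots> = (\<Sum>p\<in>I. (c (fst p) * d (snd p)) * tensor n1 n2 (\<Phi> (fst p)) (\<Theta> (snd p)) x)"
        using True by (intro sum.cong) (auto simp: tensor_def)
      finally show ?thesis .
    next
      case False
      then show ?thesis by (simp add: tensor_def)
    qed
  qed
  moreover have "finite I" unfolding I_def by simp
  moreover have "\<And>p. p \<in> I \<Longrightarrow> tensor n1 n2 (\<Phi> (fst p)) (\<Theta> (snd p)) \<in> stab_states (n1 + n2)"
    unfolding I_def using d1(1) d2(1) by (auto intro: stab_tensor)
  ultimately have "stab_decomp (n1 + n2) (tensor n1 n2 \<psi> \<phi>) (card I)"
    by (intro stab_decomp_sum) auto
  then show ?thesis unfolding I_def by (simp add: card_cartesian_product)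
qed

lemma stab_rank_tensor_le:
  assumes "qstate_on n1 \<psi>" "qstate_on n2 \<phi>"
  shows "stab_rank (n1 + n2) (tensor n1 n2 \<psi> \<phi>) \<le> stab_rank n1 \<psi> * stab_rank n2 \<phi>"
  by (rule stab_rank_le, rule stab_decomp_tensor, rule stab_decomp_stab_rank[OF assms(1)], rule stab_decomp_stab_rank[OF assms(2)])

section \<open>Binary linear codes\<close>

definition zero_vec :: "nat \<Rightarrow> bool list" where "zero_vec m = replicate m False"

definition dot :: "bool list \<Rightarrow> bool list \<Rightarrow> bool" where
  "dot x y = odd (\<Sum>j<length x. if x ! j \<and> y ! j then 1 else 0 :: nat)"

definition dual_code :: "nat \<Rightarrow> bool list set \<Rightarrow> bool list set" where
  "dual_code m L = {y. length y = m \<and> (\<forall>x\<in>L. \<not> dot x y)}"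

definition supp_in :: "nat set \<Rightarrow> bool list \<Rightarrow> bool" where
  "supp_in J a \<longleftrightarrow> (\<forall>i<length a. a ! i \<longrightarrow> i \<in> J)"

text \<open>J complements an information set of V: the vectors supported on J represent every coset
  of V exactly once.\<close>

definition transversal :: "nat \<Rightarrow> bool list set \<Rightarrow> nat set \<Rightarrow> bool" where
  "transversal m V J \<longleftrightarrow> (\<forall>y. length y = m \<longrightarrow> (\<exists>!a. length a = m \<and> supp_in J a \<and> xor_vec y a \<in> V))"

lemma xor_assoc: "length x = length y \<Longrightarrow> length y = length z \<Longrightarrow> xor_vec (xor_vec x y) z = xor_vec x (xor_vec y z)"
  by (rule nth_equalityI) auto

lemma xor_zero_l: "length x = m \<Longrightarrow> xor_vec (zero_vec m) x = x"
  by (rule nth_equalityI) (auto simp: zero_vec_def)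

lemma xor_cancel_l: "length x = length y \<Longrightarrow> xor_vec x (xor_vec x y) = y"
  by (rule nth_equalityI) auto

lemma zero_vec_length[simp]: "length (zero_vec m) = m" by (simp add: zero_vec_def)

lemma zero_vec_nth[simp]: "i < m \<Longrightarrow> zero_vec m ! i = False" by (simp add: zero_vec_def)

lemma odd_sum_xor:
  "odd (\<Sum>j<n. if P j \<and> (Q j \<noteq> R j) then 1 else 0 :: nat) =
   (odd (\<Sum>j<n. if P j \<and> Q j then 1 else 0 :: nat) \<noteq> odd (\<Sum>j<n. if P j \<and> R j then 1 else 0 :: nat))"
proof -
  have e: "(\<Sum>j<n. if P j \<and> (Q j \<noteq> R j) then 1 else 0 :: nat) + 2 * (\<Sum>j<n. if P j \<and> Q j \<and> R j then 1 else 0 :: nat)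
     = (\<Sum>j<n. if P j \<and> Q j then 1 else 0 :: nat) + (\<Sum>j<n. if P j \<and> R j then 1 else 0 :: nat)"
    by (simp add: sum.distrib[symmetric] sum_distrib_left) (intro sum.cong, auto)
  show ?thesis using arg_cong[OF e, of odd] by simp
qed

lemma dot_xor_right: "length y = length x \<Longrightarrow> length z = length x \<Longrightarrow> dot x (xor_vec y z) = (dot x y \<noteq> dot x z)"
proof -
  assume l: "length y = length x" "length z = length x"
  have "(\<Sum>j<length x. if x ! j \<and> xor_vec y z ! j then 1 else 0 :: nat) = (\<Sum>j<length x. if x ! j \<and> (y ! j \<noteq> z ! j) then 1 else 0)"
    using l by (intro sum.cong) auto
  then show ?thesis unfolding dot_def using odd_sum_xor by simp
qed

lemma dot_xor_left: "length x' = length x \<Longrightarrow> dot (xor_vec x x') y = (dot x y \<noteq> dot x' y)"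
proof -
  assume l: "length x' = length x"
  have "(\<Sum>j<length x. if xor_vec x x' ! j \<and> y ! j then 1 else 0 :: nat) = (\<Sum>j<length x. if y ! j \<and> (x ! j \<noteq> x' ! j) then 1 else 0)"
    using l by (intro sum.cong) auto
  moreover have "(\<Sum>j<length x. if x ! j \<and> y ! j then 1 else 0 :: nat) = (\<Sum>j<length x. if y ! j \<and> x ! j then 1 else 0)"
    by (intro sum.cong) auto
  moreover have "(\<Sum>j<length x'. if x' ! j \<and> y ! j then 1 else 0 :: nat) = (\<Sum>j<length x. if y ! j \<and> x' ! j then 1 else 0)"
    using l by (intro sum.cong) auto
  ultimately show ?thesis unfolding dot_def using l odd_sum_xor[where n="length x" and P="\<lambda>j. y ! j" and Q="\<lambda>j. x ! j" and R="\<lambda>j. x' ! j"] by simp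
qed

lemma dot_zero_right: "dot x (zero_vec m) = False" if "length x \<le> m"
  using that unfolding dot_def by (subst sum.neutral) auto

lemma dot_zero_left: "dot (zero_vec m) y = False"
  unfolding dot_def by (subst sum.neutral) auto

lemma dual_code_xor: "y \<in> dual_code m L \<Longrightarrow> y' \<in> dual_code m L \<Longrightarrow> L \<subseteq> {x. length x = m} \<Longrightarrow> xor_vec y y' \<in> dual_code m L"
  unfolding dual_code_def by (auto simp: dot_xor_right subset_iff)

lemma dual_code_zero: "L \<subseteq> {x. length x = m} \<Longrightarrow> zero_vec m \<in> dual_code m L"
  unfolding dual_code_def by (auto simp: dot_zero_right subset_iff)

lemma linear_code_dual: "L \<subseteq> {x. length x = m} \<Longrightarrow> linear_code m (dual_code m L)"
  unfolding linear_code_def using dual_code_xor dual_code_zero[unfolded zero_vec_def] by (auto simp: dual_code_def)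

definition unit_vec :: "nat \<Rightarrow> nat \<Rightarrow> bool list" where "unit_vec m j = (zero_vec m)[j := True]"

lemma unit_vec_length[simp]: "length (unit_vec m j) = m" by (simp add: unit_vec_def)

lemma unit_vec_nth: "i < m \<Longrightarrow> j < m \<Longrightarrow> unit_vec m j ! i = (i = j)" by (simp add: unit_vec_def nth_list_update)

lemma dot_unit_vec: "length x = m \<Longrightarrow> j < m \<Longrightarrow> dot x (unit_vec m j) = x ! j"
proof -
  assume a: "length x = m" "j < m"
  have "(\<Sum>i<m. if x ! i \<and> unit_vec m j ! i then 1 else 0 :: nat) = (\<Sum>i<m. if i = j then (if x ! j then 1 else 0) else 0)"
    using a by (intro sum.cong) (auto simp: unit_vec_nth)
  also have "\<dots> = (if x ! j then 1 else 0)" using a by simp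
  finally show ?thesis unfolding dot_def using a by simp
qed

lemma supp_in_empty: "length a = m \<Longrightarrow> supp_in {} a \<Longrightarrow> a = zero_vec m"
  unfolding supp_in_def by (intro nth_equalityI) auto

lemma transversal_all_empty: "transversal m {y. length y = m} {}"
  unfolding transversal_def
proof (intro allI impI)
  fix y :: "bool list" assume "length y = m"
  then show "\<exists>!a. length a = m \<and> supp_in {} a \<and> xor_vec y a \<in> {y. length y = m}"
    by (intro ex1I[of _ "zero_vec m"]) (auto simp: supp_in_def supp_in_empty)
qed

lemma linear_code_nonzero_elem:
  assumes "linear_code m L" "card L = 2 ^ Suc k"
  obtains x0 j0 where "x0 \<in> L" "j0 < m" "x0 ! j0"
proof -
  have "\<not> L \<subseteq> {zero_vec m}"
  proof
    assume "L \<subseteq> {zero_vec m}"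
    then have "card L \<le> 1" using card_mono[of "{zero_vec m}" L] by simp
    moreover have "(1::nat) \<le> 2 ^ k" by simp
    ultimately show False using assms(2) by simp
  qed
  then obtain x0 where x0: "x0 \<in> L" "x0 \<noteq> zero_vec m" by blast
  have "length x0 = m" using assms(1) x0(1) unfolding linear_code_def by auto
  have "\<exists>j<m. x0 ! j"
  proof (rule ccontr)
    assume "\<not> (\<exists>j<m. x0 ! j)"
    then have "x0 = zero_vec m" using \<open>length x0 = m\<close> by (intro nth_equalityI) auto
    with x0(2) show False ..
  qed
  with x0(1) show thesis using that by blast
qed

lemma linear_code_hyperplane:
  "linear_code m L \<Longrightarrow> j < m \<Longrightarrow> linear_code m {x \<in> L. \<not> x ! j}"
  unfolding linear_code_def by (auto simp: subset_iff)

lemma card_linear_code_hyperplane: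
  assumes L: "linear_code m L" "finite L" and x0: "x0 \<in> L" "x0 ! j0" and "j0 < m"
  shows "card L = 2 * card {x \<in> L. \<not> x ! j0}"
proof -
  define L0 where "L0 = {x \<in> L. \<not> x ! j0}"
  have len: "length x = m" if "x \<in> L" for x using L(1) that unfolding linear_code_def by auto
  have closed: "xor_vec x0 x \<in> L" if "x \<in> L" for x using L(1) x0(1) that unfolding linear_code_def by auto
  have "L - L0 = xor_vec x0 ` L0"
  proof
    show "L - L0 \<subseteq> xor_vec x0 ` L0"
    proof
      fix x assume x: "x \<in> L - L0"
      then have "xor_vec x0 x \<in> L0" using closed len x0 \<open>j0 < m\<close> unfolding L0_def by auto
      moreover have "x = xor_vec x0 (xor_vec x0 x)" using x len x0(1) by (simp add: xor_cancel_l)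
      ultimately show "x \<in> xor_vec x0 ` L0" by blast
    qed
    show "xor_vec x0 ` L0 \<subseteq> L - L0"
      using closed len x0 \<open>j0 < m\<close> unfolding L0_def by auto
  qed
  moreover have "inj_on (xor_vec x0) L0"
    by (rule inj_on_inverseI[of _ "xor_vec x0"]) (use len x0(1) in \<open>auto simp: L0_def xor_cancel_l\<close>)
  ultimately have "card (L - L0) = card L0" by (simp add: card_image)
  moreover have "card L = card L0 + card (L - L0)"
  proof -
    have "L0 \<subseteq> L" "finite L0" using L(2) unfolding L0_def by auto
    then show ?thesis using L(2) by (simp add: card_Diff_subset card_mono)
  qed
  ultimately show ?thesis unfolding L0_def by simp
qed

lemma dual_code_hyperplane:
  assumes L: "linear_code m L" and x0: "x0 \<in> L" "x0 ! j0" and "j0 < m"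
  shows "dual_code m L = {w \<in> dual_code m {x \<in> L. \<not> x ! j0}. \<not> dot x0 w}"
proof
  show "dual_code m L \<subseteq> {w \<in> dual_code m {x \<in> L. \<not> x ! j0}. \<not> dot x0 w}"
    using x0(1) unfolding dual_code_def by auto
next
  have len: "length x = m" if "x \<in> L" for x using L that unfolding linear_code_def by auto
  show "{w \<in> dual_code m {x \<in> L. \<not> x ! j0}. \<not> dot x0 w} \<subseteq> dual_code m L"
  proof
    fix w assume w: "w \<in> {w \<in> dual_code m {x \<in> L. \<not> x ! j0}. \<not> dot x0 w}"
    have "\<not> dot x w" if x: "x \<in> L" for x
    proof (cases "x ! j0")
      case True
      have "xor_vec x0 x \<in> L" using L x0(1) x unfolding linear_code_def by auto
      moreover have "\<not> xor_vec x0 x ! j0" using True x0(2) len[OF x] len[OF x0(1)] \<open>j0 < m\<close> by simp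
      ultimately have "\<not> dot (xor_vec x0 x) w" using w unfolding dual_code_def by auto
      have "dot x w = dot (xor_vec x0 (xor_vec x0 x)) w" using len[OF x] len[OF x0(1)] by (simp add: xor_cancel_l)
      also have "\<dots> = (dot x0 w \<noteq> dot (xor_vec x0 x) w)"
        by (rule dot_xor_left) (simp add: len[OF x] len[OF x0(1)])
      finally show ?thesis using w \<open>\<not> dot (xor_vec x0 x) w\<close> by simp
    qed (use w x in \<open>auto simp: dual_code_def\<close>)
    then show "w \<in> dual_code m L" using w unfolding dual_code_def by auto
  qed
qed

lemma unit_vec_notin_transversal:
  assumes "transversal m V J" "linear_code m V" "unit_vec m j \<in> V" "j < m"
  shows "j \<notin> J"
proof
  assume "j \<in> J"
  have "zero_vec m \<in> V" using assms(2) unfolding linear_code_def zero_vec_def by simp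
  then have "length a = m \<and> supp_in J a \<and> xor_vec (zero_vec m) a \<in> V"
    if "a = zero_vec m \<or> a = unit_vec m j" for a
    using that assms(3,4) \<open>j \<in> J\<close> by (auto simp: supp_in_def xor_zero_l unit_vec_nth)
  moreover have "\<exists>!a. length a = m \<and> supp_in J a \<and> xor_vec (zero_vec m) a \<in> V"
    using assms(1) unfolding transversal_def by simp
  ultimately have "unit_vec m j = zero_vec m" by blast
  then have "unit_vec m j ! j = zero_vec m ! j" by simp
  then show False using \<open>j < m\<close> by (simp add: unit_vec_nth)
qed

definition coset_rep :: "nat \<Rightarrow> bool list set \<Rightarrow> nat set \<Rightarrow> bool list \<Rightarrow> bool list" where
  "coset_rep m V J y = (THE a. length a = m \<and> supp_in J a \<and> xor_vec y a \<in> V)"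

lemma coset_rep:
  assumes "transversal m V J" "length y = m"
  shows "length (coset_rep m V J y) = m" "supp_in J (coset_rep m V J y)"
    "xor_vec y (coset_rep m V J y) \<in> V"
  using theI'[of "\<lambda>a. length a = m \<and> supp_in J a \<and> xor_vec y a \<in> V"] assms
  unfolding transversal_def coset_rep_def by auto

lemma coset_rep_eqI:
  assumes "transversal m V J" "length y = m" "length a = m" "supp_in J a" "xor_vec y a \<in> V"
  shows "coset_rep m V J y = a"
  unfolding coset_rep_def using assms unfolding transversal_def by (intro the1_equality) auto

lemma coset_rep_clear_coordinate:
  assumes T: "transversal m V J" and V: "linear_code m V" and ej: "unit_vec m j \<in> V" "j < m"
    and y: "length y = m" and b: "length b = m" "supp_in (insert j J) b" "xor_vec y b \<in> V"
  shows "b[j := False] = coset_rep m V J y"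
proof (rule sym, rule coset_rep_eqI[OF T y])
  have "b[j := False] = (if b ! j then xor_vec b (unit_vec m j) else b)"
    using b(1) ej(2) by (intro nth_equalityI) (auto simp: unit_vec_nth nth_list_update)
  moreover have "xor_vec (xor_vec y b) (unit_vec m j) \<in> V" using V b(3) ej(1) unfolding linear_code_def by blast
  ultimately show "xor_vec y (b[j := False]) \<in> V" using b(1,3) y by (simp add: xor_assoc)
  show "supp_in J (b[j := False])"
    using b(1,2) ej(2) unfolding supp_in_def by (auto simp: nth_list_update split: if_splits)
qed (use b(1) in simp)

lemma transversal_insert:
  assumes T: "transversal m V J" and V: "linear_code m V"
    and ej: "unit_vec m j \<in> V" "j < m" and x0: "length x0 = m" "x0 ! j"
  shows "transversal m {w \<in> V. \<not> dot x0 w} (insert j J)"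
  unfolding transversal_def
proof (intro allI impI)
  fix y :: "bool list" assume y: "length y = m"
  define e where "e = unit_vec m j"
  define a0 where "a0 = coset_rep m V J y"
  note a0 = coset_rep[OF T y, folded a0_def]
  let ?P = "\<lambda>a. length a = m \<and> supp_in (insert j J) a \<and> xor_vec y a \<in> {w \<in> V. \<not> dot x0 w}"
  have dot_shift: "dot x0 (xor_vec y (xor_vec a e)) = (\<not> dot x0 (xor_vec y a))" if "length a = m" for a
    using that y x0 ej(2) by (simp add: xor_assoc[symmetric] dot_xor_right e_def dot_unit_vec)
  show "\<exists>!a. ?P a"
  proof (rule ex_ex1I)
    show "\<exists>a. ?P a"
    proof (cases "dot x0 (xor_vec y a0)")
      case True
      have "xor_vec y (xor_vec a0 e) = xor_vec (xor_vec y a0) e" using a0(1) y by (simp add: xor_assoc e_def)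
      moreover have "xor_vec (xor_vec y a0) e \<in> V" using V a0(3) ej(1) unfolding linear_code_def e_def by blast
      moreover have "supp_in (insert j J) (xor_vec a0 e)"
        using a0(1,2) ej(2) unfolding supp_in_def e_def by (auto simp: unit_vec_nth)
      ultimately show ?thesis using True a0(1) dot_shift[OF a0(1)] by (intro exI[of _ "xor_vec a0 e"]) (simp add: e_def)
    qed (use a0 in \<open>auto simp: supp_in_def\<close>)
  next
    fix a a' assume Pa: "?P a" and Pa': "?P a'"
    have off_j: "a ! i = a' ! i" if "i \<noteq> j" for i
      using coset_rep_clear_coordinate[OF T V ej y, of a] coset_rep_clear_coordinate[OF T V ej y, of a'] Pa Pa'
        arg_cong[of _ _ "\<lambda>l. l ! i"] that by (metis mem_Collect_eq nth_list_update_neq)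
    show "a = a'"
    proof (cases "a ! j = a' ! j")
      case True
      show ?thesis
      proof (rule nth_equalityI)
        show "a ! i = a' ! i" for i using True off_j by (cases "i = j") auto
      qed (use Pa Pa' in simp)
    next
      case False
      then have "a' = xor_vec a e"
        using Pa Pa' off_j ej(2) by (intro nth_equalityI) (auto simp: e_def unit_vec_nth)
      then show ?thesis using Pa Pa' dot_shift[of a] by auto
    qed
  qed
qed

lemma exists_transversal_dual:
  "linear_code m L \<Longrightarrow> card L = 2 ^ k \<Longrightarrow> \<exists>J. J \<subseteq> {..<m} \<and> card J = k \<and> transversal m (dual_code m L) J"
proof (induction k arbitrary: L)
  case 0
  then have "L = {zero_vec m}"
    unfolding linear_code_def zero_vec_def by (metis card_1_singletonE power_0 singletonD)
  then have "dual_code m L = {y. length y = m}" by (auto simp: dual_code_def dot_zero_left)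
  then show ?case using transversal_all_empty by auto
next
  case (Suc k)
  obtain x0 j0 where x0: "x0 \<in> L" "j0 < m" "x0 ! j0"
    using linear_code_nonzero_elem[OF Suc.prems] .
  define L0 where "L0 = {x \<in> L. \<not> x ! j0}"
  have lin0: "linear_code m L0" unfolding L0_def using Suc.prems(1) x0(2) by (rule linear_code_hyperplane)
  have "finite L" using Suc.prems(2) by (intro card_ge_0_finite) simp
  then have "card L0 = 2 ^ k"
    using card_linear_code_hyperplane[OF Suc.prems(1) _ x0(1,3,2)] Suc.prems(2) unfolding L0_def by simp
  then obtain J0 where J0: "J0 \<subseteq> {..<m}" "card J0 = k" "transversal m (dual_code m L0) J0"
    using Suc.IH lin0 by blast
  have L0m: "L0 \<subseteq> {x. length x = m}" using lin0 unfolding linear_code_def by auto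
  have e: "unit_vec m j0 \<in> dual_code m L0"
    using L0m x0(2) unfolding dual_code_def L0_def by (auto simp: dot_unit_vec subset_iff)
  have "length x0 = m" using Suc.prems(1) x0(1) unfolding linear_code_def by auto
  then have "transversal m (dual_code m L) (insert j0 J0)"
    using dual_code_hyperplane[OF Suc.prems(1) x0(1,3,2)] J0(3) linear_code_dual[OF L0m] e x0
    by (simp add: transversal_insert L0_def)
  moreover have "j0 \<notin> J0" using unit_vec_notin_transversal[OF J0(3) linear_code_dual[OF L0m] e x0(2)] .
  ultimately show ?case using J0(1,2) x0(2) finite_subset[OF J0(1)] by (intro exI[of _ "insert j0 J0"]) auto
qed

section \<open>Magic code states\<close>

definition T_amp :: "bool \<Rightarrow> complex" where "T_amp b = (if b then omega else 1)"

definition T_on :: "bool list set \<Rightarrow> nat \<Rightarrow> qstate" where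
  "T_on V m = (\<lambda>y. if y \<in> V then T_tensor m y else 0)"

lemma prod_sign_of: "(\<Prod>j<(n::nat). sign_of (b j)) = sign_of (odd (\<Sum>j<n. if b j then 1 else 0 :: nat))"
  by (induction n) (auto simp: sign_of_def)

lemma magic_ket_eq_sign_dot:
  assumes "length x = m" "length y = m"
  shows "magic_ket m x y = sign_of (dot x y) * T_tensor m y"
proof -
  have "(\<Prod>j<m. (if y ! j then (if x ! j then - omega else omega) else 1) / complex_of_real (sqrt 2))
      = (\<Prod>j<m. sign_of (x ! j \<and> y ! j) * ((if y ! j then omega else 1) / complex_of_real (sqrt 2)))"
    by (intro prod.cong) (auto simp: sign_of_def)
  also have "\<dots> = (\<Prod>j<m. sign_of (x ! j \<and> y ! j)) * (\<Prod>j<m. (if y ! j then omega else 1) / complex_of_real (sqrt 2))"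
    by (rule prod.distrib)
  also have "(\<Prod>j<m. sign_of (x ! j \<and> y ! j)) = sign_of (dot x y)"
    unfolding prod_sign_of dot_def using assms by simp
  finally show ?thesis using assms by (simp add: magic_ket_def T_tensor_def)
qed

lemma bij_betw_xor_linear_code:
  assumes "linear_code m L" "x0 \<in> L"
  shows "bij_betw (xor_vec x0) L L"
proof -
  have len: "length x = m" if "x \<in> L" for x using assms(1) that unfolding linear_code_def by auto
  have closed: "xor_vec x0 x \<in> L" if "x \<in> L" for x using assms that unfolding linear_code_def by auto
  have inv: "xor_vec x0 (xor_vec x0 x) = x" if "x \<in> L" for x
    using len[OF that] len[OF assms(2)] by (simp add: xor_cancel_l)
  show ?thesis by (rule bij_betw_byWitness[of _ "xor_vec x0"]) (auto simp: closed inv)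
qed

lemma sum_sign_dot:
  assumes "linear_code m L" "finite L" "length y = m"
  shows "(\<Sum>x\<in>L. sign_of (dot x y)) = (if y \<in> dual_code m L then of_nat (card L) else 0)"
proof (cases "y \<in> dual_code m L")
  case True
  then have "(\<Sum>x\<in>L. sign_of (dot x y)) = (\<Sum>x\<in>L. 1)" unfolding dual_code_def by (intro sum.cong) auto
  then show ?thesis using True by simp
next
  case False
  then obtain x0 where x0: "x0 \<in> L" "dot x0 y" using assms(3) unfolding dual_code_def by auto
  have len: "length x = m" if "x \<in> L" for x using assms(1) that unfolding linear_code_def by auto
  define S where "S = (\<Sum>x\<in>L. sign_of (dot x y))"
  have "S = (\<Sum>x\<in>L. sign_of (dot (xor_vec x0 x) y))"
    unfolding S_def by (rule sum.reindex_bij_betw[OF bij_betw_xor_linear_code[OF assms(1) x0(1)], symmetric])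
  also have "\<dots> = (\<Sum>x\<in>L. - sign_of (dot x y))"
    using x0 len by (intro sum.cong refl) (auto simp: dot_xor_left sign_of_def)
  also have "\<dots> = - S" unfolding S_def by (simp add: sum_negf)
  finally have "S = 0" by simp
  then show ?thesis using False S_def by simp
qed

lemma magic_code_state_eq_T_on_dual:
  assumes "linear_code m L" "code_dim L k"
  shows "magic_code_state m k L = scale (complex_of_real (2 powr (- real k / 2)) * of_nat (card L)) (T_on (dual_code m L) m)"
proof
  fix y
  have fin: "finite L" using assms(2) unfolding code_dim_def by (intro card_ge_0_finite) simp
  have Lm: "L \<subseteq> {x. length x = m}" using assms(1) unfolding linear_code_def by auto
  show "magic_code_state m k L y = scale (complex_of_real (2 powr (- real k / 2)) * of_nat (card L)) (T_on (dual_code m L) m) y"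
  proof (cases "length y = m")
    case True
    have "(\<Sum>x\<in>L. magic_ket m x y) = (\<Sum>x\<in>L. sign_of (dot x y) * T_tensor m y)"
      using Lm True by (intro sum.cong) (auto simp: magic_ket_eq_sign_dot)
    also have "\<dots> = (\<Sum>x\<in>L. sign_of (dot x y)) * T_tensor m y" by (simp add: sum_distrib_right)
    also have "\<dots> = (if y \<in> dual_code m L then of_nat (card L) else 0) * T_tensor m y"
      using sum_sign_dot[OF assms(1) fin True] by simp
    finally show ?thesis by (simp add: magic_code_state_def scale_def T_on_def)
  next
    case False
    have "magic_ket m x y = 0" for x using False by (simp add: magic_ket_def)
    moreover have "y \<notin> dual_code m L" using False unfolding dual_code_def by auto
    ultimately show ?thesis by (simp add: magic_code_state_def scale_def T_on_def)
  qed
qed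

lemma qstate_on_magic_code_state: "qstate_on m (magic_code_state m k L)"
  by (simp add: qstate_on_def magic_code_state_def magic_ket_def)

lemma qstate_on_T_on: "V \<subseteq> {x. length x = m} \<Longrightarrow> qstate_on m (T_on V m)"
  by (auto simp: qstate_on_def T_on_def T_tensor_def)

lemma stab_rank_T_on_dual_le:
  assumes "linear_code m L" "code_dim L k"
  shows "stab_rank m (T_on (dual_code m L) m) \<le> stab_rank m (magic_code_state m k L)"
proof -
  define c where "c = complex_of_real (2 powr (- real k / 2)) * of_nat (card L)"
  have "card L > 0" using assms(2) unfolding code_dim_def by simp
  then have c0: "c \<noteq> 0" unfolding c_def by simp
  have "T_on (dual_code m L) m = scale (1 / c) (magic_code_state m k L)"
    using magic_code_state_eq_T_on_dual[OF assms] c0 unfolding c_def[symmetric] by (simp add: scale_scale scale_one)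
  then show ?thesis using stab_rank_scale_le[OF qstate_on_magic_code_state] by metis
qed

section \<open>Splitting |T>^{\<otimes>m}\<close>

definition ones :: "nat \<Rightarrow> qstate" where "ones m = (\<lambda>y. if length y = m then 1 else 0)"

lemma stab_decomp_scale_stab: "\<Phi> \<in> stab_states n \<Longrightarrow> stab_decomp n (scale c \<Phi>) 1"
  unfolding stab_decomp_def by (intro exI[of _ "\<lambda>_. c"] exI[of _ "\<lambda>_. \<Phi>"]) (auto simp: scale_def)

lemma stab_decomp_ones: "stab_decomp m (ones m) 1"
proof (induction m)
  case 0
  have "ones 0 = scale 1 (ket0 0)" by (auto simp: ones_def ket0_def scale_def)
  then show ?case using stab_decomp_scale_stab[OF stab_states.init] by metis
next
  case (Suc m)
  define o1 where "o1 = scale (complex_of_real (sqrt 2)) (hgate 0 (ket0 1))"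
  have d1: "stab_decomp 1 o1 1" unfolding o1_def
    by (intro stab_decomp_scale_stab stab_states.H stab_states.init) simp
  have o1v: "o1 = ones 1"
  proof
    fix y show "o1 y = ones 1 y"
    proof (cases "length y = 1")
      case True
      then obtain b where "y = [b]" by (metis One_nat_def length_0_conv length_Suc_conv)
      then show ?thesis by (cases b) (auto simp: o1_def scale_def hgate_def ket0_def ones_def)
    next
      case False
      then show ?thesis by (auto simp: o1_def scale_def hgate_def ket0_def ones_def dest!: arg_cong[where f=length])
    qed
  qed
  have "tensor 1 m (ones 1) (ones m) = ones (Suc m)"
    by (auto simp: tensor_def ones_def)
  then show ?case using stab_decomp_tensor[OF d1 Suc.IH] o1v by simp
qed

lemma stab_rank_substitute_le:
  assumes "qstate_on (n + K) \<Psi>" "affine_map n K h"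
  shows "stab_rank n (substitute n h \<Psi>) \<le> stab_rank (n + K) \<Psi>"
proof -
  obtain c \<Phi> where d: "\<forall>i<stab_rank (n + K) \<Psi>. \<Phi> i \<in> stab_states (n + K)"
      "\<Psi> = (\<lambda>x. \<Sum>i<stab_rank (n + K) \<Psi>. c i * \<Phi> i x)"
    using stab_decomp_stab_rank[OF assms(1)] unfolding stab_decomp_def by blast
  define F where "F = (\<lambda>i. scale (c i) (substitute n h (\<Phi> i)))"
  have "F i \<in> scaled_stab n" if "i \<in> {..<stab_rank (n + K) \<Psi>}" for i
    unfolding F_def using that d(1) by (intro scaled_stab_scale stab_substitute_affine[OF _ assms(2)]) auto
  moreover have "substitute n h \<Psi> = (\<lambda>y. \<Sum>i\<in>{..<stab_rank (n + K) \<Psi>}. F i y)"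
    unfolding F_def by (subst d(2)) (auto simp: scale_def substitute_def)
  ultimately show ?thesis using stab_rank_sum_scaled_le[of "{..<stab_rank (n + K) \<Psi>}" F n] by simp
qed

lemma prod_lessThan_add: "(\<Prod>i<(a::nat)+b. f i) = (\<Prod>i<a. f i) * (\<Prod>i<b. f (a + i))"
  by (induction b) (auto simp: algebra_simps)

lemma omega_nonzero: "omega \<noteq> 0" by (simp add: omega_def)

lemma T_amp_not: "T_amp b * T_amp (\<not> b) = omega"
  by (cases b) (auto simp: T_amp_def)

lemma T_tensor_eq_prod: "length y = m \<Longrightarrow> T_tensor m y = (\<Prod>j<m. T_amp (y ! j)) / complex_of_real (sqrt 2) ^ m"
  by (simp add: T_tensor_def T_amp_def prod_dividef)

lemma T_tensor_append:
  assumes "length y = m1 + m2"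
  shows "T_tensor (m1 + m2) y = T_tensor m1 (take m1 y) * T_tensor m2 (drop m1 y)"
  using assms prod_lessThan_add[of "\<lambda>j. (if y ! j then omega else 1) / complex_of_real (sqrt 2)" m1 m2]
  by (simp add: T_tensor_def)

lemma T_tensor_map_sorted:
  assumes "finite J"
  shows "T_tensor (card J) (map f (sorted_list_of_set J))
    = (\<Prod>j\<in>J. T_amp (f j)) / complex_of_real (sqrt 2) ^ card J"
proof -
  define js where "js = sorted_list_of_set J"
  have js: "distinct js" "set js = J" "length js = card J" using assms unfolding js_def by auto
  have "(\<Prod>i<card J. T_amp (map f js ! i)) = (\<Prod>i<length js. T_amp (f (js ! i)))"
    using js(3) by (intro prod.cong) auto
  also have "\<dots> = (\<Prod>j\<in>J. T_amp (f j))"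
    using prod.reindex_bij_betw[OF bij_betw_nth[OF js(1) refl refl], of "\<lambda>j. T_amp (f j)"] js(2)
    by (simp add: lessThan_atLeast0)
  finally show ?thesis using js(3) by (simp add: T_tensor_eq_prod js_def)
qed

lemma prod_T_amp_exchange:
  fixes m :: nat
  assumes "J \<subseteq> {..<m}" "\<And>j. j < m \<Longrightarrow> j \<notin> J \<Longrightarrow> v j = y j"
  shows "(\<Prod>j<m. T_amp (v j)) * ((\<Prod>j\<in>J. T_amp (y j)) * (\<Prod>j\<in>J. T_amp (\<not> v j)))
    = omega ^ card J * (\<Prod>j<m. T_amp (y j))"
proof -
  have split: "(\<Prod>j<m. f j) = (\<Prod>j\<in>J. f j) * (\<Prod>j\<in>{..<m}-J. f j)" for f :: "nat \<Rightarrow> complex"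
    using prod.subset_diff[OF assms(1)] by (simp add: mult.commute)
  have "(\<Prod>j\<in>{..<m}-J. T_amp (v j)) = (\<Prod>j\<in>{..<m}-J. T_amp (y j))"
    using assms(2) by (intro prod.cong) auto
  moreover have "(\<Prod>j\<in>J. T_amp (v j)) * (\<Prod>j\<in>J. T_amp (\<not> v j)) = omega ^ card J"
    by (simp add: prod.distrib[symmetric] T_amp_not)
  ultimately show ?thesis
    unfolding split[of "\<lambda>j. T_amp (v j)"] split[of "\<lambda>j. T_amp (y j)"] by (simp add: algebra_simps)
qed

lemma supp_in_xor: "supp_in J a \<Longrightarrow> supp_in J b \<Longrightarrow> length a = length b \<Longrightarrow> supp_in J (xor_vec a b)"
  unfolding supp_in_def by auto

lemma coset_rep_xor:
  assumes T: "transversal m V J" and V: "linear_code m V" and y: "length y = m" "length y' = m"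
  shows "coset_rep m V J (xor_vec y y') = xor_vec (coset_rep m V J y) (coset_rep m V J y')"
proof (rule coset_rep_eqI[OF T])
  note r = coset_rep[OF T y(1)] coset_rep[OF T y(2)]
  have "xor_vec (xor_vec y y') (xor_vec (coset_rep m V J y) (coset_rep m V J y'))
      = xor_vec (xor_vec y (coset_rep m V J y)) (xor_vec y' (coset_rep m V J y'))"
    using y r by (intro nth_equalityI) auto
  then show "xor_vec (xor_vec y y') (xor_vec (coset_rep m V J y) (coset_rep m V J y')) \<in> V"
    using V r unfolding linear_code_def by auto
qed (use y coset_rep[OF T y(1)] coset_rep[OF T y(2)] in \<open>auto intro: supp_in_xor\<close>)

lemma coset_rep_zero:
  assumes "transversal m V J" "linear_code m V"
  shows "coset_rep m V J (replicate m False) = replicate m False"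
  using assms(2) by (intro coset_rep_eqI[OF assms(1)]) (auto simp: supp_in_def linear_code_def xor_vec_def)

lemma affine_fun_coset_proj:
  assumes "transversal m V J" "linear_code m V" "i < m"
  shows "affine_fun m (\<lambda>y. xor_vec y (coset_rep m V J y) ! i)"
  unfolding affine_fun_def
proof (intro allI impI)
  fix y y' :: "bool list" assume y: "length y = m" "length y' = m"
  show "xor_vec (xor_vec y y') (coset_rep m V J (xor_vec y y')) ! i
      = ((xor_vec y (coset_rep m V J y) ! i \<noteq> xor_vec y' (coset_rep m V J y') ! i)
        \<noteq> xor_vec (replicate m False) (coset_rep m V J (replicate m False)) ! i)"
    using coset_rep_xor[OF assms(1,2) y] coset_rep_zero[OF assms(1,2)]
      coset_rep(1)[OF assms(1) y(1)] coset_rep(1)[OF assms(1) y(2)] y assms(3) by auto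
qed

lemma affine_map_cong:
  "affine_map n K h \<Longrightarrow> (\<And>y. length y = n \<Longrightarrow> h y = h' y) \<Longrightarrow> affine_map n K h'"
  unfolding affine_map_def by (auto intro: affine_fun_cong)

lemma affine_map_append:
  assumes "affine_map n K1 h1" "affine_map n K2 h2"
  shows "affine_map n (K1 + K2) (\<lambda>y. h1 y @ h2 y)"
  unfolding affine_map_def
proof (intro conjI allI impI)
  show "length (h1 y @ h2 y) = K1 + K2" if "length y = n" for y
    using assms that unfolding affine_map_def by simp
  fix i assume i: "i < K1 + K2"
  show "affine_fun n (\<lambda>y. (h1 y @ h2 y) ! i)"
  proof (cases "i < K1")
    case True
    then show ?thesis using assms(1)
      by (auto simp: affine_map_def nth_append intro: affine_fun_cong[of n "\<lambda>y. h1 y ! i"])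
  next
    case False
    then have "affine_fun n (\<lambda>y. h2 y ! (i - K1))" using assms(2) i unfolding affine_map_def by simp
    then show ?thesis
      by (rule affine_fun_cong) (use assms(1) False in \<open>simp add: affine_map_def nth_append\<close>)
  qed
qed

lemma affine_map_map:
  "(\<And>j. j \<in> set js \<Longrightarrow> affine_fun n (f j)) \<Longrightarrow> affine_map n (length js) (\<lambda>y. map (\<lambda>j. f j y) js)"
  unfolding affine_map_def by simp

text \<open>With v the projection of y to V along the coordinates J, the substitution
  y \<mapsto> (v, y restricted to J, \<not> v restricted to J) turns (T restricted to V) \<otimes> |T>^{\<otimes>2|J|}
  into a multiple of |T>^{\<otimes>m}.\<close>

definition exchange_map :: "nat \<Rightarrow> bool list set \<Rightarrow> nat set \<Rightarrow> bool list \<Rightarrow> bool list" where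
  "exchange_map m V J y = (let v = xor_vec y (coset_rep m V J y); js = sorted_list_of_set J in
     v @ map (\<lambda>j. y ! j) js @ map (\<lambda>j. \<not> v ! j) js)"

lemma affine_map_exchange_map:
  assumes V: "linear_code m V" and J: "J \<subseteq> {..<m}" and T: "transversal m V J"
  shows "affine_map m (m + 2 * card J) (exchange_map m V J)"
proof -
  define v where "v y = xor_vec y (coset_rep m V J y)" for y
  define js where "js = sorted_list_of_set J"
  have js: "set js = J" "length js = card J"
    using J finite_subset[OF J] unfolding js_def by auto
  have "affine_map m m (\<lambda>y. map (\<lambda>i. v y ! i) [0..<m])"
    using affine_map_map[of "[0..<m]" m "\<lambda>i y. v y ! i"] affine_fun_coset_proj[OF T V] by (simp add: v_def)
  moreover have "affine_map m (card J) (\<lambda>y. map (\<lambda>j. y ! j) js)"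
    using affine_map_map[of js m "\<lambda>j y. y ! j"] J js by (auto intro: affine_fun_nth)
  moreover have "affine_map m (card J) (\<lambda>y. map (\<lambda>j. \<not> v y ! j) js)"
  proof -
    have "affine_fun m (\<lambda>y. \<not> v y ! j)" if "j \<in> set js" for j
      using that J js unfolding v_def by (intro affine_fun_Not affine_fun_coset_proj[OF T V]) auto
    then show ?thesis using affine_map_map[of js m "\<lambda>j y. \<not> v y ! j"] js by simp
  qed
  ultimately have "affine_map m (m + (card J + card J))
      (\<lambda>y. map (\<lambda>i. v y ! i) [0..<m] @ map (\<lambda>j. y ! j) js @ map (\<lambda>j. \<not> v y ! j) js)"
    by (intro affine_map_append)
  moreover have "length (v y) = m" if "length y = m" for y
    using coset_rep(1)[OF T that] that unfolding v_def by simp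
  then have "map (\<lambda>i. v y ! i) [0..<m] = v y" if "length y = m" for y
    using that by (metis map_nth)
  ultimately show ?thesis
    unfolding mult_2 by (auto intro: affine_map_cong simp: exchange_map_def v_def js_def Let_def)
qed

lemma T_tensor_eq_exchange:
  assumes J: "J \<subseteq> {..<m}" and T: "transversal m V J" and y: "length y = m"
  shows "T_tensor m y = (complex_of_real (sqrt 2) ^ (2 * card J) / omega ^ card J)
    * tensor m (2 * card J) (T_on V m) (T_tensor (2 * card J)) (exchange_map m V J y)"
proof -
  define K where "K = card J"
  define v where "v = xor_vec y (coset_rep m V J y)"
  define js where "js = sorted_list_of_set J"
  have "finite J" using J finite_subset by blast
  then have js: "set js = J" "length js = K" unfolding js_def K_def by auto
  have v: "length v = m" "v \<in> V" "\<And>i. i < m \<Longrightarrow> i \<notin> J \<Longrightarrow> v ! i = y ! i"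
    using coset_rep[OF T y] y unfolding v_def supp_in_def by auto
  have "tensor m (2 * K) (T_on V m) (T_tensor (2 * K)) (exchange_map m V J y)
      = T_tensor m v * (T_tensor K (map (\<lambda>j. y ! j) js) * T_tensor K (map (\<lambda>j. \<not> v ! j) js))"
    using v js T_tensor_append[of _ K K]
    by (simp add: exchange_map_def Let_def v_def[symmetric] js_def[symmetric] tensor_app T_on_def mult_2)
  also have "\<dots> = (\<Prod>j<m. T_amp (v ! j)) * ((\<Prod>j\<in>J. T_amp (y ! j)) * (\<Prod>j\<in>J. T_amp (\<not> v ! j)))
      / (complex_of_real (sqrt 2) ^ m * complex_of_real (sqrt 2) ^ (2 * K))"
    by (simp add: T_tensor_eq_prod v(1) T_tensor_map_sorted[OF \<open>finite J\<close>] js_def K_def mult_2 power_add)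
  also have "\<dots> = omega ^ K * T_tensor m y / complex_of_real (sqrt 2) ^ (2 * K)"
    using prod_T_amp_exchange[OF J, of "\<lambda>j. v ! j" "\<lambda>j. y ! j"] v(3) y
    by (simp add: T_tensor_eq_prod K_def)
  finally show ?thesis using omega_nonzero unfolding K_def by (simp add: field_simps)
qed

lemma stab_rank_T_tensor_le_T_on:
  assumes V: "linear_code m V" and J: "J \<subseteq> {..<m}" and T: "transversal m V J"
  shows "stab_rank m (T_tensor m) \<le> stab_rank m (T_on V m) * stab_rank (2 * card J) (T_tensor (2 * card J))"
proof -
  define K where "K = card J"
  define \<Psi> where "\<Psi> = tensor m (m + 2 * K) (ones m) (tensor m (2 * K) (T_on V m) (T_tensor (2 * K)))"
  have aff: "affine_map m (m + 2 * K) (exchange_map m V J)"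
    unfolding K_def by (rule affine_map_exchange_map[OF V J T])
  have "T_tensor m = scale (complex_of_real (sqrt 2) ^ (2 * K) / omega ^ K) (substitute m (exchange_map m V J) \<Psi>)"
  proof
    fix y
    show "T_tensor m y = scale (complex_of_real (sqrt 2) ^ (2 * K) / omega ^ K) (substitute m (exchange_map m V J) \<Psi>) y"
    proof (cases "length y = m")
      case True
      then have "length (exchange_map m V J y) = m + 2 * K" using aff unfolding affine_map_def by simp
      then show ?thesis
        using True T_tensor_eq_exchange[OF J T True]
        by (simp add: \<Psi>_def K_def scale_def substitute_def ones_def tensor_app)
    qed (simp add: scale_def substitute_def T_tensor_def)
  qed
  moreover have "stab_rank m (substitute m (exchange_map m V J) \<Psi>)
      \<le> stab_rank m (T_on V m) * stab_rank (2 * K) (T_tensor (2 * K))"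
  proof -
    have "stab_rank m (substitute m (exchange_map m V J) \<Psi>) \<le> stab_rank (m + (m + 2 * K)) \<Psi>"
      by (rule stab_rank_substitute_le[OF _ aff]) (simp add: \<Psi>_def qstate_on_def tensor_def)
    also have "\<dots> \<le> 1 * (stab_rank m (T_on V m) * stab_rank (2 * K) (T_tensor (2 * K)))"
      unfolding \<Psi>_def by (intro stab_rank_le stab_decomp_tensor stab_decomp_ones stab_decomp_stab_rank)
        (use V in \<open>auto simp: T_on_def qstate_on_def T_tensor_def linear_code_def subset_iff\<close>)
    finally show ?thesis by simp
  qed
  ultimately show ?thesis unfolding K_def
    by (metis order_trans stab_rank_scale_le qstate_on_def substitute_def)
qed

section \<open>Powers of a code\<close>

definition code_prod :: "bool list set \<Rightarrow> bool list set \<Rightarrow> bool list set" where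
  "code_prod V1 V2 = {a @ b | a b. a \<in> V1 \<and> b \<in> V2}"

definition shift_set :: "nat \<Rightarrow> nat set \<Rightarrow> nat set" where
  "shift_set m J = (\<lambda>j. m + j) ` J"

lemma xor_vec_append: "length a = length a' \<Longrightarrow> xor_vec (a @ b) (a' @ b') = xor_vec a a' @ xor_vec b b'"
  by (simp add: xor_vec_def)

lemma code_prod_appendI: "a \<in> V1 \<Longrightarrow> b \<in> V2 \<Longrightarrow> a @ b \<in> code_prod V1 V2"
  unfolding code_prod_def by blast

lemma code_prod_mem:
  assumes "V1 \<subseteq> {x. length x = m1}" "length y = m1 + m2"
  shows "y \<in> code_prod V1 V2 \<longleftrightarrow> take m1 y \<in> V1 \<and> drop m1 y \<in> V2"
proof
  assume "y \<in> code_prod V1 V2"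
  then obtain a b where "y = a @ b" "a \<in> V1" "b \<in> V2" unfolding code_prod_def by blast
  moreover from this have "length a = m1" using assms(1) by auto
  ultimately show "take m1 y \<in> V1 \<and> drop m1 y \<in> V2" by simp
next
  assume "take m1 y \<in> V1 \<and> drop m1 y \<in> V2"
  then show "y \<in> code_prod V1 V2" unfolding code_prod_def by (metis (mono_tags, lifting) append_take_drop_id mem_Collect_eq)
qed

lemma linear_code_prod:
  assumes "linear_code m1 V1" "linear_code m2 V2"
  shows "linear_code (m1 + m2) (code_prod V1 V2)"
  unfolding linear_code_def
proof (intro conjI ballI)
  show "code_prod V1 V2 \<subseteq> {x. length x = m1 + m2}"
    using assms unfolding code_prod_def linear_code_def by (auto simp: subset_iff)
  show "replicate (m1 + m2) False \<in> code_prod V1 V2"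
    using assms unfolding code_prod_def linear_code_def by (auto simp: replicate_add)
  fix x y assume "x \<in> code_prod V1 V2" "y \<in> code_prod V1 V2"
  then obtain a b a' b' where ab: "x = a @ b" "y = a' @ b'" "a \<in> V1" "a' \<in> V1" "b \<in> V2" "b' \<in> V2"
    unfolding code_prod_def by blast
  then have "length a = length a'" using assms(1) unfolding linear_code_def by auto
  then have "xor_vec x y = xor_vec a a' @ xor_vec b b'" using ab by (simp add: xor_vec_append)
  moreover have "xor_vec a a' \<in> V1" "xor_vec b b' \<in> V2" using ab assms unfolding linear_code_def by auto
  ultimately show "xor_vec x y \<in> code_prod V1 V2" by (simp add: code_prod_appendI)
qed

lemma supp_in_append_shift_set:
  assumes "J1 \<subseteq> {..<length a1}"
  shows "supp_in (J1 \<union> shift_set (length a1) J2) (a1 @ a2) \<longleftrightarrow> supp_in J1 a1 \<and> supp_in J2 a2"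
proof -
  have split: "(\<forall>i<length a1 + length a2. P i) \<longleftrightarrow> (\<forall>i<length a1. P i) \<and> (\<forall>i<length a2. P (length a1 + i))"
    for P :: "nat \<Rightarrow> bool"
  proof
    assume R: "(\<forall>i<length a1. P i) \<and> (\<forall>i<length a2. P (length a1 + i))"
    show "\<forall>i<length a1 + length a2. P i"
    proof (intro allI impI)
      fix i assume "i < length a1 + length a2"
      with R show "P i" by (cases "i < length a1") (auto dest: spec[of _ "i - length a1"])
    qed
  qed auto
  have "i \<in> J1 \<union> shift_set (length a1) J2 \<longleftrightarrow> i \<in> J1" if "i < length a1" for i
    using that unfolding shift_set_def by auto
  moreover have "length a1 + i \<in> J1 \<union> shift_set (length a1) J2 \<longleftrightarrow> i \<in> J2" for i
    using assms unfolding shift_set_def by auto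
  ultimately show ?thesis unfolding supp_in_def length_append split by (simp add: nth_append)
qed

lemma transversal_code_prod:
  assumes V1: "linear_code m1 V1" and T1: "transversal m1 V1 J1" "J1 \<subseteq> {..<m1}"
    and T2: "transversal m2 V2 J2"
  shows "transversal (m1 + m2) (code_prod V1 V2) (J1 \<union> shift_set m1 J2)"
  unfolding transversal_def
proof (intro allI impI)
  fix y :: "bool list" assume y: "length y = m1 + m2"
  let ?P1 = "\<lambda>a1. length a1 = m1 \<and> supp_in J1 a1 \<and> xor_vec (take m1 y) a1 \<in> V1"
  let ?P2 = "\<lambda>a2. length a2 = m2 \<and> supp_in J2 a2 \<and> xor_vec (drop m1 y) a2 \<in> V2"
  have V1m: "V1 \<subseteq> {x. length x = m1}" using V1 unfolding linear_code_def by auto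
  have iff: "(length a = m1 + m2 \<and> supp_in (J1 \<union> shift_set m1 J2) a \<and> xor_vec y a \<in> code_prod V1 V2)
      \<longleftrightarrow> length a = m1 + m2 \<and> ?P1 (take m1 a) \<and> ?P2 (drop m1 a)" for a
  proof (cases "length a = m1 + m2")
    case True
    have "supp_in (J1 \<union> shift_set m1 J2) a \<longleftrightarrow> supp_in J1 (take m1 a) \<and> supp_in J2 (drop m1 a)"
      using supp_in_append_shift_set[of J1 "take m1 a" J2 "drop m1 a"] T1(2) True by simp
    moreover have "xor_vec y a \<in> code_prod V1 V2 \<longleftrightarrow>
        xor_vec (take m1 y) (take m1 a) \<in> V1 \<and> xor_vec (drop m1 y) (drop m1 a) \<in> V2"
      using code_prod_mem[OF V1m, of "xor_vec y a" m2 V2] True y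
      by (simp add: xor_vec_def take_map drop_map take_zip drop_zip)
    moreover have "length (take m1 a) = m1" "length (drop m1 a) = m2" using True by simp_all
    ultimately show ?thesis using True by (simp only:) blast
  qed simp
  have ex1: "\<exists>!a1. ?P1 a1" "\<exists>!a2. ?P2 a2" using T1(1) T2 y unfolding transversal_def by simp_all
  obtain a1 where a1: "?P1 a1" and u1: "\<And>b. ?P1 b \<Longrightarrow> b = a1" using ex1(1) by auto
  obtain a2 where a2: "?P2 a2" and u2: "\<And>b. ?P2 b \<Longrightarrow> b = a2" using ex1(2) by auto
  show "\<exists>!a. length a = m1 + m2 \<and> supp_in (J1 \<union> shift_set m1 J2) a \<and> xor_vec y a \<in> code_prod V1 V2"
    unfolding iff
  proof (rule ex1I[of _ "a1 @ a2"])
    show "length (a1 @ a2) = m1 + m2 \<and> ?P1 (take m1 (a1 @ a2)) \<and> ?P2 (drop m1 (a1 @ a2))"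
      using a1 a2 by simp
    show "b = a1 @ a2" if "length b = m1 + m2 \<and> ?P1 (take m1 b) \<and> ?P2 (drop m1 b)" for b
      using u1[of "take m1 b"] u2[of "drop m1 b"] that append_take_drop_id[of m1 b] by simp
  qed
qed

lemma card_Un_shift_set:
  assumes "J1 \<subseteq> {..<m1}" "finite J1" "finite J2"
  shows "card (J1 \<union> shift_set m1 J2) = card J1 + card J2"
proof -
  have "J1 \<inter> shift_set m1 J2 = {}" using assms(1) unfolding shift_set_def by auto
  moreover have "card (shift_set m1 J2) = card J2" unfolding shift_set_def by (simp add: card_image)
  ultimately show ?thesis using assms by (simp add: card_Un_disjoint shift_set_def)
qed

lemma T_on_code_prod:
  assumes "V1 \<subseteq> {x. length x = m1}" "V2 \<subseteq> {x. length x = m2}"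
  shows "T_on (code_prod V1 V2) (m1 + m2) = tensor m1 m2 (T_on V1 m1) (T_on V2 m2)"
proof
  fix y
  show "T_on (code_prod V1 V2) (m1 + m2) y = tensor m1 m2 (T_on V1 m1) (T_on V2 m2) y"
  proof (cases "length y = m1 + m2")
    case True
    then show ?thesis using code_prod_mem[OF assms(1) True, of V2] T_tensor_append[OF True]
      by (simp add: T_on_def tensor_def)
  next
    case False
    have "y \<notin> code_prod V1 V2" using False assms unfolding code_prod_def by (auto simp: subset_iff)
    then show ?thesis using False by (simp add: T_on_def tensor_def)
  qed
qed

fun code_power :: "bool list set \<Rightarrow> nat \<Rightarrow> bool list set" where
  "code_power V 0 = {[]}"
| "code_power V (Suc t) = code_prod V (code_power V t)"

fun transversal_power :: "nat \<Rightarrow> nat set \<Rightarrow> nat \<Rightarrow> nat set" where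
  "transversal_power m J 0 = {}"
| "transversal_power m J (Suc t) = J \<union> shift_set m (transversal_power m J t)"

lemma code_power:
  assumes "linear_code m V" "transversal m V J" "J \<subseteq> {..<m}"
  shows "linear_code (m * t) (code_power V t) \<and> transversal (m * t) (code_power V t) (transversal_power m J t)
    \<and> transversal_power m J t \<subseteq> {..<m * t} \<and> card (transversal_power m J t) = card J * t"
proof (induction t)
  case 0
  have "linear_code 0 {[]}" "transversal 0 {[]} {}"
    unfolding linear_code_def transversal_def by (auto simp: xor_vec_def supp_in_def)
  then show ?case by simp
next
  case (Suc t)
  then have IH: "linear_code (m * t) (code_power V t)" "transversal (m * t) (code_power V t) (transversal_power m J t)"
    "transversal_power m J t \<subseteq> {..<m * t}" "card (transversal_power m J t) = card J * t" by auto
  have "finite J" "finite (transversal_power m J t)" using assms(3) IH(3) finite_subset by auto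
  then have "card (transversal_power m J (Suc t)) = card J * Suc t"
    using card_Un_shift_set[OF assms(3)] IH(4) by simp
  moreover have "transversal_power m J (Suc t) \<subseteq> {..<m + m * t}"
    using assms(3) IH(3) by (auto simp: shift_set_def)
  ultimately show ?case
    using linear_code_prod[OF assms(1) IH(1)] transversal_code_prod[OF assms(1,2,3) IH(2)] by simp
qed

lemma stab_rank_T_on_code_power_le:
  assumes "V \<subseteq> {x. length x = m}"
  shows "code_power V t \<subseteq> {x. length x = m * t}
    \<and> stab_rank (m * t) (T_on (code_power V t) (m * t)) \<le> stab_rank m (T_on V m) ^ t"
proof (induction t)
  case 0
  have "T_on {[]} 0 = scale 1 (ket0 0)" by (auto simp: T_on_def ket0_def scale_def T_tensor_def)
  then have "stab_rank 0 (T_on {[]} 0) \<le> 1"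
    using stab_rank_le[OF stab_decomp_scale_stab[OF stab_states.init]] by metis
  then show ?case by simp
next
  case (Suc t)
  then have Vt: "code_power V t \<subseteq> {x. length x = m * t}" by simp
  have "stab_rank (m + m * t) (T_on (code_power V (Suc t)) (m + m * t))
      \<le> stab_rank m (T_on V m) * stab_rank (m * t) (T_on (code_power V t) (m * t))"
    using stab_rank_tensor_le[OF qstate_on_T_on[OF assms] qstate_on_T_on[OF Vt]] T_on_code_prod[OF assms Vt]
    by simp
  also have "\<dots> \<le> stab_rank m (T_on V m) * stab_rank m (T_on V m) ^ t" using Suc.IH by simp
  finally have "stab_rank (m + m * t) (T_on (code_power V (Suc t)) (m + m * t)) \<le> stab_rank m (T_on V m) ^ Suc t"
    by simp
  moreover have "code_power V (Suc t) \<subseteq> {x. length x = m * Suc t}"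
    using assms Vt by (auto simp: code_prod_def subset_iff)
  ultimately show ?case by simp
qed

lemma stab_rank_T_tensor_submult:
  assumes "linear_code m V" "J \<subseteq> {..<m}" "transversal m V J"
  shows "stab_rank (m * t) (T_tensor (m * t))
    \<le> stab_rank m (T_on V m) ^ t * stab_rank (2 * card J * t) (T_tensor (2 * card J * t))"
proof -
  note p = code_power[OF assms(1,3,2), of t]
  have "stab_rank (m * t) (T_tensor (m * t))
      \<le> stab_rank (m * t) (T_on (code_power V t) (m * t)) * stab_rank (2 * (card J * t)) (T_tensor (2 * (card J * t)))"
    using stab_rank_T_tensor_le_T_on[of "m * t" "code_power V t" "transversal_power m J t"] p by simp
  also have "\<dots> \<le> stab_rank m (T_on V m) ^ t * stab_rank (2 * (card J * t)) (T_tensor (2 * (card J * t)))"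
    using stab_rank_T_on_code_power_le[of V m t] assms(1) unfolding linear_code_def
    by (intro mult_right_mono) auto
  finally show ?thesis by (simp add: mult.assoc)
qed

lemma stab_rank_T_tensor_le_magic_code_power:
  assumes "linear_code m L" "code_dim L k"
  shows "stab_rank (m * t) (T_tensor (m * t))
    \<le> stab_rank m (magic_code_state m k L) ^ t * stab_rank (2 * k * t) (T_tensor (2 * k * t))"
proof -
  obtain J where J: "J \<subseteq> {..<m}" "card J = k" "transversal m (dual_code m L) J"
    using exists_transversal_dual[OF assms(1)] assms(2) unfolding code_dim_def by blast
  have "linear_code m (dual_code m L)" by (rule linear_code_dual) (use assms(1) in \<open>simp add: linear_code_def\<close>)
  then have "stab_rank (m * t) (T_tensor (m * t))
      \<le> stab_rank m (T_on (dual_code m L) m) ^ t * stab_rank (2 * k * t) (T_tensor (2 * k * t))"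
    using stab_rank_T_tensor_submult[OF _ J(1,3)] J(2) by simp
  also have "\<dots> \<le> stab_rank m (magic_code_state m k L) ^ t * stab_rank (2 * k * t) (T_tensor (2 * k * t))"
    using stab_rank_T_on_dual_le[OF assms] by (intro mult_right_mono power_mono) auto
  finally show ?thesis .
qed

section \<open>Growth rates\<close>

lemma abs_poly_le: "\<bar>poly p (x::real)\<bar> \<le> (\<Sum>i\<le>degree p. \<bar>coeff p i\<bar>) * (1 + \<bar>x\<bar>) ^ degree p"
proof -
  have "\<bar>poly p x\<bar> = \<bar>\<Sum>i\<le>degree p. coeff p i * x ^ i\<bar>" by (simp add: poly_altdef)
  also have "\<dots> \<le> (\<Sum>i\<le>degree p. \<bar>coeff p i * x ^ i\<bar>)" by (rule sum_abs)
  also have "\<dots> \<le> (\<Sum>i\<le>degree p. \<bar>coeff p i\<bar> * (1 + \<bar>x\<bar>) ^ degree p)"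
  proof (intro sum_mono)
    fix i assume i: "i \<in> {..degree p}"
    have "\<bar>x\<bar> ^ i \<le> (1 + \<bar>x\<bar>) ^ i" by (intro power_mono) auto
    also have "\<dots> \<le> (1 + \<bar>x\<bar>) ^ degree p" using i by (intro power_increasing) auto
    finally show "\<bar>coeff p i * x ^ i\<bar> \<le> \<bar>coeff p i\<bar> * (1 + \<bar>x\<bar>) ^ degree p"
      by (simp add: abs_mult power_abs mult_left_mono)
  qed
  also have "\<dots> = (\<Sum>i\<le>degree p. \<bar>coeff p i\<bar>) * (1 + \<bar>x\<bar>) ^ degree p" by (simp add: sum_distrib_right)
  finally show ?thesis .
qed

lemma one_plus_abs_poly_of_nat_mult_le:
  fixes p :: "real poly"
  obtains S where "\<And>t. 1 + \<bar>poly p (real (a * t))\<bar> \<le> S * (1 + real t) ^ degree p"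
proof
  fix t
  define A where "A = (\<Sum>i\<le>degree p. \<bar>coeff p i\<bar>)"
  define W where "W = ((1 + real a) * (1 + real t)) ^ degree p"
  have "1 \<le> W" unfolding W_def by (intro one_le_power) (simp add: algebra_simps)
  moreover have "\<bar>poly p (real (a * t))\<bar> \<le> A * W"
  proof -
    have "\<bar>poly p (real (a * t))\<bar> \<le> A * (1 + real (a * t)) ^ degree p"
      using abs_poly_le[of p "real (a * t)"] unfolding A_def by simp
    also have "\<dots> \<le> A * W"
      unfolding A_def W_def by (intro mult_left_mono power_mono sum_nonneg) (auto simp: algebra_simps)
    finally show ?thesis .
  qed
  ultimately have "1 + \<bar>poly p (real (a * t))\<bar> \<le> (1 + A) * W"
    unfolding distrib_right mult_1 by linarith
  then show "1 + \<bar>poly p (real (a * t))\<bar> \<le> ((1 + A) * (1 + real a) ^ degree p) * (1 + real t) ^ degree p"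
    unfolding W_def by (simp add: power_mult_distrib mult.assoc)
qed

lemma eventually_sequentially_mult:
  assumes "eventually P sequentially" "a > 0"
  shows "eventually (\<lambda>t. P (a * t)) sequentially"
proof -
  obtain N where "\<And>n. n \<ge> N \<Longrightarrow> P n" using assms(1) unfolding eventually_sequentially by blast
  moreover have "t \<le> a * t" for t using assms(2) by simp
  ultimately show ?thesis unfolding eventually_sequentially by (meson le_trans)
qed

lemma power_not_eventually_le_poly_times_power:
  fixes B X c E :: real
  assumes "0 \<le> X" "X < B" "c > 0"
    and le: "eventually (\<lambda>t. c * B ^ t \<le> X ^ t * (E * (1 + real t) ^ D)) sequentially"
  shows False
proof -
  have B: "c * B ^ t > 0" for t using assms by simp
  show False
  proof (cases "X = 0")
  case True
  have "eventually (\<lambda>t::nat. t \<ge> 1) sequentially" by (rule eventually_ge_at_top)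
  with le have "eventually (\<lambda>t. c * B ^ t \<le> 0) sequentially"
    by eventually_elim (use True in \<open>simp add: power_0_left\<close>)
  then have "eventually (\<lambda>t. False) sequentially"
    proof eventually_elim
    case (elim t)
    with B[of t] show False by linarith
  qed
  then show False by simp
next
  case False
  define r where "r = B / X"
  have "r > 1" using False assms unfolding r_def by simp
  then have small: "(\<lambda>t. E * (1 + real t) ^ D) \<in> o(\<lambda>t. r ^ t)" by real_asymp
  have "eventually (\<lambda>t. \<bar>E * (1 + real t) ^ D\<bar> \<le> c / 2 * \<bar>r ^ t\<bar>) sequentially"
    using landau_o.smallD[OF small, of "c / 2"] \<open>c > 0\<close> by simp
  with le have "eventually (\<lambda>t. c * B ^ t \<le> c / 2 * B ^ t) sequentially"
  proof eventually_elim
    case (elim t)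
    have "X ^ t * (E * (1 + real t) ^ D) \<le> X ^ t * (c / 2 * r ^ t)"
      using elim(2) \<open>r > 1\<close> \<open>0 \<le> X\<close> by (intro mult_left_mono) auto
    also have "\<dots> = c / 2 * B ^ t"
      using False unfolding r_def by (simp add: power_divide)
    finally show ?case using elim(1) by linarith
  qed
  then have "eventually (\<lambda>t. False) sequentially"
    proof eventually_elim
    case (elim t)
    with B[of t] show False by linarith
  qed
  then show False by simp
qed
qed

lemma bigomega_powr_div_polyE:
  fixes R :: "nat \<Rightarrow> real" and p :: "real poly"
  assumes "R \<in> \<Omega>(\<lambda>n. 2 powr (\<gamma> * real n) / poly p (real n))" "p \<noteq> 0"
  obtains c where "c > 0"
    "eventually (\<lambda>n. c * 2 powr (\<gamma> * real n) \<le> \<bar>R n\<bar> * \<bar>poly p (real n)\<bar>) sequentially"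
proof -
  obtain c where "c > 0" and
    c: "eventually (\<lambda>n. c * \<bar>2 powr (\<gamma> * real n) / poly p (real n)\<bar> \<le> \<bar>R n\<bar>) sequentially"
    using landau_omega.bigE[OF assms(1)] by auto
  have "eventually (\<lambda>n. poly p (real n) \<noteq> 0) sequentially"
    using eventually_compose_filterlim[OF poly_eventually_not_zero[OF assms(2)]
        filterlim_real_at_infinity_sequentially] .
  with c have "eventually (\<lambda>n. c * 2 powr (\<gamma> * real n) \<le> \<bar>R n\<bar> * \<bar>poly p (real n)\<bar>) sequentially"
    by eventually_elim (simp add: abs_div field_simps)
  with \<open>c > 0\<close> show thesis by (rule that)
qed

lemma bigo_poly_times_powrE:
  fixes R :: "nat \<Rightarrow> real" and q :: "real poly"
  assumes "R \<in> O(\<lambda>n. poly q (real n) * 2 powr (\<gamma> * real n))" "\<gamma> \<ge> 0"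
  obtains C where "C \<ge> 0" "\<And>n. \<bar>R n\<bar> \<le> C * (1 + \<bar>poly q (real n)\<bar>) * 2 powr (\<gamma> * real n)"
proof -
  obtain C0 where "C0 > 0" and
    "eventually (\<lambda>n. \<bar>R n\<bar> \<le> C0 * \<bar>poly q (real n) * 2 powr (\<gamma> * real n)\<bar>) sequentially"
    using landau_o.bigE[OF assms(1)] by auto
  then obtain N where N: "\<And>n. n \<ge> N \<Longrightarrow> \<bar>R n\<bar> \<le> C0 * (\<bar>poly q (real n)\<bar> * 2 powr (\<gamma> * real n))"
    unfolding eventually_sequentially by (auto simp: abs_mult)
  define C where "C = C0 + (\<Sum>i<N. \<bar>R i\<bar>)"
  have "\<bar>R n\<bar> \<le> C * (1 + \<bar>poly q (real n)\<bar>) * 2 powr (\<gamma> * real n)" for n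
  proof -
    have E: "1 \<le> 2 powr (\<gamma> * real n)" using assms(2) by (simp add: ge_one_powr_ge_zero)
    have "\<bar>R n\<bar> \<le> C0 * (\<bar>poly q (real n)\<bar> * 2 powr (\<gamma> * real n)) + (\<Sum>i<N. \<bar>R i\<bar>)"
    proof (cases "n \<ge> N")
      case True
      then show ?thesis using N[OF True] by (simp add: sum_nonneg add_increasing2)
    next
      case False
      then have "\<bar>R n\<bar> \<le> (\<Sum>i<N. \<bar>R i\<bar>)" by (intro member_le_sum) auto
      then show ?thesis using \<open>C0 > 0\<close> by (simp add: add_increasing)
    qed
    also have "\<dots> \<le> C * (1 + \<bar>poly q (real n)\<bar>) * 2 powr (\<gamma> * real n)"
    proof -
      define S where "S = (\<Sum>i<N. \<bar>R i\<bar>)"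
      define Q where "Q = \<bar>poly q (real n)\<bar>"
      have "0 \<le> S" "0 \<le> Q" unfolding S_def Q_def by (simp_all add: sum_nonneg)
      then have "S \<le> S * 2 powr (\<gamma> * real n)" "0 \<le> C0 * 2 powr (\<gamma> * real n)"
        "0 \<le> S * Q * 2 powr (\<gamma> * real n)"
        using mult_left_mono[OF E, of S] \<open>C0 > 0\<close> by simp_all
      moreover have "C * (1 + Q) * 2 powr (\<gamma> * real n) = C0 * (Q * 2 powr (\<gamma> * real n))
          + (C0 * 2 powr (\<gamma> * real n) + S * 2 powr (\<gamma> * real n) + S * Q * 2 powr (\<gamma> * real n))"
        unfolding C_def S_def by (simp add: algebra_simps)
      ultimately show ?thesis unfolding S_def Q_def by linarith
    qed
    finally show ?thesis .
  qed
  moreover have "C \<ge> 0" using \<open>C0 > 0\<close> unfolding C_def by (simp add: sum_nonneg)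
  ultimately show thesis using that by blast
qed

lemma exponent_le_log_of_submultiplicative:
  fixes R :: "nat \<Rightarrow> real" and p q :: "real poly" and a b :: nat
  assumes lower: "R \<in> \<Omega>(\<lambda>n. 2 powr (\<gamma> * real n) / poly p (real n))" "p \<noteq> 0"
    and upper: "R \<in> O(\<lambda>n. poly q (real n) * 2 powr (\<gamma> * real n))" "\<gamma> \<ge> 0"
    and submult: "\<And>t. R (a * t) \<le> X ^ t * R (b * t)"
    and "b < a" "X \<ge> 0" and nonneg: "\<And>n. R n \<ge> 0"
  shows "\<gamma> * (real a - real b) \<le> log 2 X"
proof -
  define E where "E = (\<lambda>n::nat. 2 powr (\<gamma> * real n))"
  define B where "B = 2 powr (\<gamma> * (real a - real b))"
  have split: "E (a * t) = B ^ t * E (b * t)" for t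
    unfolding E_def B_def
    by (simp add: powr_realpow[symmetric] powr_powr powr_add[symmetric] algebra_simps)
  obtain c where "c > 0" and "eventually (\<lambda>n. c * E n \<le> \<bar>R n\<bar> * \<bar>poly p (real n)\<bar>) sequentially"
    unfolding E_def by (rule bigomega_powr_div_polyE[OF lower])
  then have "eventually (\<lambda>n. c * E n \<le> R n * \<bar>poly p (real n)\<bar>) sequentially"
    using nonneg by simp
  from eventually_sequentially_mult[OF this, of a] \<open>b < a\<close>
  have low: "eventually (\<lambda>t. c * E (a * t) \<le> R (a * t) * \<bar>poly p (real (a * t))\<bar>) sequentially"
    by simp
  obtain C where "C \<ge> 0" and C: "\<And>n. \<bar>R n\<bar> \<le> C * (1 + \<bar>poly q (real n)\<bar>) * E n"
    using bigo_poly_times_powrE[OF upper] unfolding E_def by blast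
  obtain Sp where Sp: "\<And>t. 1 + \<bar>poly p (real (a * t))\<bar> \<le> Sp * (1 + real t) ^ degree p"
    using one_plus_abs_poly_of_nat_mult_le[of p a] by blast
  obtain Sq where Sq: "\<And>t. 1 + \<bar>poly q (real (b * t))\<bar> \<le> Sq * (1 + real t) ^ degree q"
    using one_plus_abs_poly_of_nat_mult_le[of q b] by blast
  have "c * B ^ t \<le> X ^ t * ((C * Sq * Sp) * (1 + real t) ^ (degree q + degree p))"
    if low_t: "c * E (a * t) \<le> R (a * t) * \<bar>poly p (real (a * t))\<bar>" for t
  proof -
    have "R (b * t) \<le> C * (Sq * (1 + real t) ^ degree q) * E (b * t)"
      using C[of "b * t"] Sq[of t] \<open>C \<ge> 0\<close>
      by (smt (verit, best) E_def mult_right_mono mult_left_mono powr_ge_zero)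
    then have "R (a * t) * \<bar>poly p (real (a * t))\<bar>
        \<le> (X ^ t * (C * (Sq * (1 + real t) ^ degree q) * E (b * t))) * (Sp * (1 + real t) ^ degree p)"
      using submult[of t] Sp[of t] nonneg \<open>X \<ge> 0\<close>
      by (smt (verit, best) mult_mono mult_left_mono zero_le_power abs_ge_zero)
    then have "c * B ^ t * E (b * t)
        \<le> (X ^ t * ((C * Sq * Sp) * (1 + real t) ^ (degree q + degree p))) * E (b * t)"
      using low_t by (simp add: split power_add algebra_simps)
    then show ?thesis by (rule mult_right_le_imp_le) (simp add: E_def)
  qed
  with low have "eventually (\<lambda>t. c * B ^ t \<le> X ^ t * ((C * Sq * Sp) * (1 + real t) ^ (degree q + degree p)))
      sequentially" by (rule eventually_mono)
  then have "B \<le> X"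
    using power_not_eventually_le_poly_times_power[OF \<open>X \<ge> 0\<close> _ \<open>c > 0\<close>] by (meson not_le)
  have "\<gamma> * (real a - real b) = log 2 B" unfolding B_def by simp
  also have "\<dots> \<le> log 2 X" using \<open>B \<le> X\<close> unfolding B_def by (intro log_mono) auto
  finally show ?thesis .
qed

theorem theorem4:
  fixes \<gamma> :: real
  assumes "\<gamma> > 0"
    and "\<exists>p q :: real poly. p \<noteq> 0 \<and>
           (\<lambda>n. real (stab_rank n (T_tensor n))) \<in> \<Omega>(\<lambda>n. 2 powr (\<gamma> * real n) / poly p (real n)) \<and>
           (\<lambda>n. real (stab_rank n (T_tensor n))) \<in> O(\<lambda>n. poly q (real n) * 2 powr (\<gamma> * real n))"
  shows "\<forall>(m::nat) (k::nat) L. linear_code m L \<and> code_dim L k \<and> real k < real m / 2 \<longrightarrow>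
           \<gamma> \<le> log 2 (real (stab_rank m (magic_code_state m k L))) / (real m - 2 * real k)"
proof (intro allI impI)
  fix m k :: nat and L
  assume "linear_code m L \<and> code_dim L k \<and> real k < real m / 2"
  then have L: "linear_code m L" "code_dim L k" and "2 * k < m" by auto
  obtain p q :: "real poly" where "p \<noteq> 0"
    and lower: "(\<lambda>n. real (stab_rank n (T_tensor n))) \<in> \<Omega>(\<lambda>n. 2 powr (\<gamma> * real n) / poly p (real n))"
    and upper: "(\<lambda>n. real (stab_rank n (T_tensor n))) \<in> O(\<lambda>n. poly q (real n) * 2 powr (\<gamma> * real n))"
    using assms(2) by blast
  let ?X = "real (stab_rank m (magic_code_state m k L))"
  have "\<gamma> * (real m - real (2 * k)) \<le> log 2 ?X"
  proof (rule exponent_le_log_of_submultiplicative[OF lower \<open>p \<noteq> 0\<close> upper])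
    show "real (stab_rank (m * t) (T_tensor (m * t))) \<le> ?X ^ t * real (stab_rank (2 * k * t) (T_tensor (2 * k * t)))"
      for t using stab_rank_T_tensor_le_magic_code_power[OF L, of t] by (simp flip: of_nat_power of_nat_mult)
  qed (use assms(1) \<open>2 * k < m\<close> in auto)
  then show "\<gamma> \<le> log 2 ?X / (real m - 2 * real k)"
    using \<open>2 * k < m\<close> by (simp add: pos_le_divide_eq)
qed

end
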